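(* Let $G$ be a nontrivial finite abelian $p$-group of rank $n$ with $n\le p-1$. Then $\tau(G)=n+1$.
   Context: The rank is the minimal number of generators. A projective representation of $G$ is an $\alpha$-representation for some cocycle $\alpha\in Z^2(G,\mathbb{C}^\times)$: a map $\rho:G\to\mathrm{GL}_m(\mathbb{C})$ with $\rho(1)=I$ and $\rho(g)\rho(h)=\alpha(g,h)\rho(gh)$; it is faithful if the only $g$ with $\rho(g)$ scalar is $g=1$. $\tau(G)$ is the least degree of a faithful projective representation of $G$. *)

theory Defs
  imports "Jordan_Normal_Form.Matrix" "HOL-Algebra.Generated_Groups"
begin

definition group_rank :: "('a, 'b) monoid_scheme \<Rightarrow> nat" where
  "group_rank G = (LEAST n. \<exists>S. S \<subseteq> carrier G \<and> finite S \<and> card S = n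
                              \<and> generate G S = carrier G)"

definition cocycle2 :: "('a, 'b) monoid_scheme \<Rightarrow> ('a \<Rightarrow> 'a \<Rightarrow> complex) \<Rightarrow> bool" where
  "cocycle2 G \<alpha> \<longleftrightarrow>
     (\<forall>g\<in>carrier G. \<forall>h\<in>carrier G. \<alpha> g h \<noteq> 0) \<and>
     (\<forall>g\<in>carrier G. \<forall>h\<in>carrier G. \<forall>k\<in>carrier G.
        \<alpha> g h * \<alpha> (g \<otimes>\<^bsub>G\<^esub> h) k = \<alpha> h k * \<alpha> g (h \<otimes>\<^bsub>G\<^esub> k))"

definition alpha_rep :: "('a, 'b) monoid_scheme \<Rightarrow> ('a \<Rightarrow> 'a \<Rightarrow> complex) \<Rightarrow> nat
                          \<Rightarrow> ('a \<Rightarrow> complex mat) \<Rightarrow> bool" where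
  "alpha_rep G \<alpha> m \<rho> \<longleftrightarrow>
     (\<forall>g\<in>carrier G. \<rho> g \<in> carrier_mat m m \<and> invertible_mat (\<rho> g)) \<and>
     \<rho> \<one>\<^bsub>G\<^esub> = 1\<^sub>m m \<and>
     (\<forall>g\<in>carrier G. \<forall>h\<in>carrier G. \<rho> g * \<rho> h = \<alpha> g h \<cdot>\<^sub>m \<rho> (g \<otimes>\<^bsub>G\<^esub> h))"

definition proj_rep :: "('a, 'b) monoid_scheme \<Rightarrow> nat \<Rightarrow> ('a \<Rightarrow> complex mat) \<Rightarrow> bool" where
  "proj_rep G m \<rho> \<longleftrightarrow> (\<exists>\<alpha>. cocycle2 G \<alpha> \<and> alpha_rep G \<alpha> m \<rho>)"

definition faithful_proj_rep :: "('a, 'b) monoid_scheme \<Rightarrow> nat \<Rightarrow> ('a \<Rightarrow> complex mat) \<Rightarrow> bool" where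
  "faithful_proj_rep G m \<rho> \<longleftrightarrow> proj_rep G m \<rho> \<and>
     (\<forall>g\<in>carrier G. (\<exists>c. \<rho> g = c \<cdot>\<^sub>m 1\<^sub>m m) \<longrightarrow> g = \<one>\<^bsub>G\<^esub>)"

definition tau :: "('a, 'b) monoid_scheme \<Rightarrow> nat" where
  "tau G = (LEAST m. \<exists>\<rho>. faithful_proj_rep G m \<rho>)"

end

theory Submission
  imports Defs "Jordan_Normal_Form.VS_Connect" "Jordan_Normal_Form.Determinant"
    "HOL-Algebra.Multiplicative_Group"
begin

text \<open>
  Upper bound: if \<open>G\<close> is generated by \<open>n\<close> elements, extending characters from subgroups
  yields \<open>n\<close> characters \<open>\<chi>\<^sub>i\<close> without common kernel, and
  \<open>g \<mapsto> diag(1, \<chi>\<^sub>1 g, \<dots>, \<chi>\<^sub>n g)\<close> is faithful even projectively.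

  Lower bound: let \<open>\<rho>\<close> be a faithful \<open>\<alpha>\<close>-representation of degree \<open>m \<le> n < p\<close>.
  The commutator factors \<open>\<alpha>(g,h)/\<alpha>(h,g)\<close> are \<open>m\<close>-th roots of unity (by determinants) and
  \<open>|G|\<close>-th roots of unity (by multiplicativity), hence \<open>1\<close> since \<open>m\<close> is prime to \<open>p\<close>;
  so the \<open>\<rho> g\<close> commute. Rescaled to finite order they have a common eigenvector \<open>u\<close>, and
  rescaling by the eigenvalues gives a faithful linear representation fixing \<open>u\<close>. Extending
  \<open>u\<close> to a basis by vectors that are common eigenvectors modulo the span of the previous
  ones, the pointwise stabilisers of the growing spans descend from \<open>G\<close> to \<open>1\<close> in \<open>m - 1\<close>
  steps, each with cyclic quotient (a finite group of eigenvalues in \<open>\<complex>\<^sup>\<times>\<close>), so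
  \<open>G\<close> has rank at most \<open>m - 1 < n\<close>.
\<close>

hide_const (open) Polynomial.order

lemma smult_smult_mat: "a \<cdot>\<^sub>m (b \<cdot>\<^sub>m A) = (a * b :: 'a :: comm_ring) \<cdot>\<^sub>m A"
  by (rule eq_matI) (auto simp: mult.assoc)

lemma one_smult_mat [simp]: "(1 :: 'a :: ring_1) \<cdot>\<^sub>m A = A"
  by (rule eq_matI) auto

lemma smult_mat_mult_vec:
  assumes A: "A \<in> carrier_mat nr nc" and v: "v \<in> carrier_vec nc"
  shows "(k \<cdot>\<^sub>m A) *\<^sub>v v = (k :: 'a :: comm_ring) \<cdot>\<^sub>v (A *\<^sub>v v)"
proof (rule eq_vecI)
  fix i assume "i < dim_vec (k \<cdot>\<^sub>v (A *\<^sub>v v))"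
  hence i: "i < nr" using A by simp
  have "((k \<cdot>\<^sub>m A) *\<^sub>v v) $ i = (\<Sum>j<nc. k * A $$ (i,j) * v $ j)"
    using A v i by (simp add: scalar_prod_def row_def atLeast0LessThan)
  also have "\<dots> = k * (\<Sum>j<nc. A $$ (i,j) * v $ j)" by (simp add: sum_distrib_left mult.assoc)
  also have "\<dots> = (k \<cdot>\<^sub>v (A *\<^sub>v v)) $ i"
    using A v i by (simp add: scalar_prod_def row_def atLeast0LessThan)
  finally show "((k \<cdot>\<^sub>m A) *\<^sub>v v) $ i = (k \<cdot>\<^sub>v (A *\<^sub>v v)) $ i" .
qed (use A in simp)

lemma smult_pow_mat:
  assumes A: "A \<in> carrier_mat n n"
  shows "(c \<cdot>\<^sub>m A) ^\<^sub>m k = (c ^ k :: 'a :: comm_ring_1) \<cdot>\<^sub>m (A ^\<^sub>m k)"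
proof (induct k)
  case 0 thus ?case using A by (intro eq_matI) auto
next
  case (Suc k)
  have "(c \<cdot>\<^sub>m A) ^\<^sub>m Suc k = (c ^ k \<cdot>\<^sub>m (A ^\<^sub>m k)) * (c \<cdot>\<^sub>m A)" using Suc by simp
  also have "\<dots> = c ^ Suc k \<cdot>\<^sub>m (A ^\<^sub>m Suc k)"
    using mult_smult_assoc_mat[OF pow_carrier_mat[OF A] smult_carrier_mat[OF A]]
      mult_smult_distrib[OF pow_carrier_mat[OF A] A] by (simp add: smult_smult_mat mult.commute)
  finally show ?case .
qed

lemma pow_mat_commute:
  assumes A: "A \<in> carrier_mat m m" and B: "B \<in> carrier_mat m m" and AB: "A * B = B * A"
  shows "A * B ^\<^sub>m k = B ^\<^sub>m k * A"
proof (induct k)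
  case 0 thus ?case using A B by simp
next
  case (Suc k)
  have Bk: "B ^\<^sub>m k \<in> carrier_mat m m" using B by simp
  have "A * B ^\<^sub>m Suc k = (A * B ^\<^sub>m k) * B" using assoc_mult_mat[OF A Bk B] by simp
  also have "\<dots> = B ^\<^sub>m k * (A * B)" using Suc assoc_mult_mat[OF Bk A B] by simp
  also have "\<dots> = B ^\<^sub>m Suc k * A" using AB assoc_mult_mat[OF Bk B A] by simp
  finally show ?case .
qed

lemma pow_mat_Suc_left: "A \<in> carrier_mat m m \<Longrightarrow> A ^\<^sub>m Suc k = A * A ^\<^sub>m k"
  using pow_mat_commute[of A m A k] by simp

lemma invertible_mat_det_nonzero:
  fixes A :: "'a :: field mat"
  assumes A: "A \<in> carrier_mat n n" and inv: "invertible_mat A"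
  shows "det A \<noteq> 0"
proof -
  from inv obtain B where AB: "A * B = 1\<^sub>m n" and BA: "B * A = 1\<^sub>m (dim_row B)"
    using A unfolding invertible_mat_def inverts_mat_def by auto
  have B: "B \<in> carrier_mat n n"
    using arg_cong[OF AB, of dim_col] arg_cong[OF BA, of dim_col] A by auto
  have "det A * det B = 1" using det_mult[OF A B] AB by simp
  thus ?thesis by auto
qed

lemma smult_vec_cancel:
  fixes u :: "'a :: field vec"
  assumes u: "u \<in> carrier_vec m" and u0: "u \<noteq> 0\<^sub>v m" and eq: "c \<cdot>\<^sub>v u = d \<cdot>\<^sub>v u"
  shows "c = d"
proof -
  have "\<exists>i<m. u $ i \<noteq> 0"
  proof (rule ccontr)
    assume "\<not> ?thesis"
    hence "u = 0\<^sub>v m" using u by (intro eq_vecI) auto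
    thus False using u0 by simp
  qed
  then obtain i where i: "i < m" "u $ i \<noteq> 0" by blast
  have "(c \<cdot>\<^sub>v u) $ i = (d \<cdot>\<^sub>v u) $ i" using eq by simp
  thus ?thesis using i u by simp
qed

section \<open>Projective representations of abelian groups\<close>

lemma power_eq_1_coprime:
  fixes z :: "'a :: monoid_mult"
  assumes a: "z ^ a = 1" and b: "z ^ b = 1" and ab: "coprime a b"
  shows "z = 1"
proof (cases "a = 0")
  case True thus ?thesis using b ab by simp
next
  case False
  obtain x y where xy: "a * x = b * y + gcd a b" using bezout_nat[OF False] by blast
  have "z ^ (a * x) = z ^ (b * y) * z ^ gcd a b" unfolding xy by (simp add: power_add)
  thus ?thesis using a b ab by (simp add: power_mult)
qed

lemma cocycle2_nonzero: "cocycle2 G \<alpha> \<Longrightarrow> g \<in> carrier G \<Longrightarrow> h \<in> carrier G \<Longrightarrow> \<alpha> g h \<noteq> 0"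
  unfolding cocycle2_def by blast

lemma cocycle2_assoc:
  "cocycle2 G \<alpha> \<Longrightarrow> g \<in> carrier G \<Longrightarrow> h \<in> carrier G \<Longrightarrow> k \<in> carrier G \<Longrightarrow>
    \<alpha> g h * \<alpha> (g \<otimes>\<^bsub>G\<^esub> h) k = \<alpha> h k * \<alpha> g (h \<otimes>\<^bsub>G\<^esub> k)"
  unfolding cocycle2_def by blast

lemma cocycle2_commutator_mult:
  assumes G: "comm_group G" and \<alpha>: "cocycle2 G \<alpha>"
    and g: "g \<in> carrier G" and x: "x \<in> carrier G" and y: "y \<in> carrier G"
  shows "\<alpha> g (x \<otimes>\<^bsub>G\<^esub> y) / \<alpha> (x \<otimes>\<^bsub>G\<^esub> y) g = \<alpha> g x / \<alpha> x g * (\<alpha> g y / \<alpha> y g)"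
proof -
  interpret G: comm_group G by fact
  have gxy: "\<alpha> g x * \<alpha> (g \<otimes>\<^bsub>G\<^esub> x) y = \<alpha> x y * \<alpha> g (x \<otimes>\<^bsub>G\<^esub> y)"
    and xgy: "\<alpha> x g * \<alpha> (x \<otimes>\<^bsub>G\<^esub> g) y = \<alpha> g y * \<alpha> x (g \<otimes>\<^bsub>G\<^esub> y)"
    and xyg: "\<alpha> x y * \<alpha> (x \<otimes>\<^bsub>G\<^esub> y) g = \<alpha> y g * \<alpha> x (y \<otimes>\<^bsub>G\<^esub> g)"
    using cocycle2_assoc[OF \<alpha>] g x y by auto
  have "x \<otimes>\<^bsub>G\<^esub> g = g \<otimes>\<^bsub>G\<^esub> x" "y \<otimes>\<^bsub>G\<^esub> g = g \<otimes>\<^bsub>G\<^esub> y"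
    using g x y G.m_comm by auto
  with xgy xyg have xgy': "\<alpha> x g * \<alpha> (g \<otimes>\<^bsub>G\<^esub> x) y = \<alpha> g y * \<alpha> x (g \<otimes>\<^bsub>G\<^esub> y)"
    and xyg': "\<alpha> x y * \<alpha> (x \<otimes>\<^bsub>G\<^esub> y) g = \<alpha> y g * \<alpha> x (g \<otimes>\<^bsub>G\<^esub> y)" by simp_all
  have "\<alpha> x y * (\<alpha> g (x \<otimes>\<^bsub>G\<^esub> y) * \<alpha> x g * \<alpha> y g)
      = \<alpha> g x * \<alpha> y g * (\<alpha> x g * \<alpha> (g \<otimes>\<^bsub>G\<^esub> x) y)"
    using gxy by (simp add: ac_simps)
  also have "\<dots> = \<alpha> g x * \<alpha> g y * (\<alpha> y g * \<alpha> x (g \<otimes>\<^bsub>G\<^esub> y))"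
    using xgy' by (simp add: ac_simps)
  also have "\<dots> = \<alpha> x y * (\<alpha> g x * \<alpha> g y * \<alpha> (x \<otimes>\<^bsub>G\<^esub> y) g)"
    using xyg' by (simp add: ac_simps)
  finally have "\<alpha> g (x \<otimes>\<^bsub>G\<^esub> y) * \<alpha> x g * \<alpha> y g = \<alpha> g x * \<alpha> g y * \<alpha> (x \<otimes>\<^bsub>G\<^esub> y) g"
    using cocycle2_nonzero[OF \<alpha> x y] by simp
  thus ?thesis using cocycle2_nonzero[OF \<alpha>] g x y by (simp add: field_simps)
qed

lemma alpha_rep_carrier: "alpha_rep G \<alpha> m \<rho> \<Longrightarrow> g \<in> carrier G \<Longrightarrow> \<rho> g \<in> carrier_mat m m"
  unfolding alpha_rep_def by blast

lemma alpha_rep_det_nonzero: "alpha_rep G \<alpha> m \<rho> \<Longrightarrow> g \<in> carrier G \<Longrightarrow> det (\<rho> g) \<noteq> 0"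
  unfolding alpha_rep_def using invertible_mat_det_nonzero by blast

lemma alpha_rep_one: "alpha_rep G \<alpha> m \<rho> \<Longrightarrow> \<rho> \<one>\<^bsub>G\<^esub> = 1\<^sub>m m"
  unfolding alpha_rep_def by blast

lemma alpha_rep_mult:
  "alpha_rep G \<alpha> m \<rho> \<Longrightarrow> g \<in> carrier G \<Longrightarrow> h \<in> carrier G \<Longrightarrow>
    \<rho> g * \<rho> h = \<alpha> g h \<cdot>\<^sub>m \<rho> (g \<otimes>\<^bsub>G\<^esub> h)"
  unfolding alpha_rep_def by blast

lemma alpha_rep_commutator:
  assumes G: "comm_group G" and \<alpha>: "cocycle2 G \<alpha>" and \<rho>: "alpha_rep G \<alpha> m \<rho>"
    and g: "g \<in> carrier G" and h: "h \<in> carrier G"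
  shows "\<rho> g * \<rho> h = (\<alpha> g h / \<alpha> h g) \<cdot>\<^sub>m (\<rho> h * \<rho> g)"
proof -
  interpret G: comm_group G by fact
  have "\<rho> h * \<rho> g = \<alpha> h g \<cdot>\<^sub>m \<rho> (g \<otimes>\<^bsub>G\<^esub> h)"
    using alpha_rep_mult[OF \<rho> h g] G.m_comm[OF h g] by simp
  thus ?thesis
    using alpha_rep_mult[OF \<rho> g h] cocycle2_nonzero[OF \<alpha> h g] by (simp add: smult_smult_mat)
qed

text \<open>The commutator factor is both an \<open>m\<close>-th root of unity (take determinants) and an
  \<open>order G\<close>-th root of unity (it is a character in its second argument).\<close>

lemma alpha_rep_commute:
  assumes G: "comm_group G" and \<alpha>: "cocycle2 G \<alpha>" and \<rho>: "alpha_rep G \<alpha> m \<rho>"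
    and cop: "coprime m (order G)"
    and g: "g \<in> carrier G" and h: "h \<in> carrier G"
  shows "\<rho> g * \<rho> h = \<rho> h * \<rho> g"
proof -
  interpret G: comm_group G by fact
  define c where "c x = \<alpha> g x / \<alpha> x g" for x
  have c_mult: "c (x \<otimes>\<^bsub>G\<^esub> y) = c x * c y" if "x \<in> carrier G" "y \<in> carrier G" for x y
    unfolding c_def using cocycle2_commutator_mult[OF G \<alpha> g] that by blast
  have "c \<one>\<^bsub>G\<^esub> \<noteq> 0" using cocycle2_nonzero[OF \<alpha>] g by (simp add: c_def)
  hence c_one: "c \<one>\<^bsub>G\<^esub> = 1" using c_mult[of "\<one>\<^bsub>G\<^esub>" "\<one>\<^bsub>G\<^esub>"] by simp
  have "c (h [^]\<^bsub>G\<^esub> k) = c h ^ k" for k :: nat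
    by (induct k) (simp_all add: c_one c_mult h)
  hence c_order: "c h ^ order G = 1" using G.pow_order_eq_1[OF h] c_one by metis
  have \<rho>gh: "\<rho> g * \<rho> h = c h \<cdot>\<^sub>m (\<rho> h * \<rho> g)"
    unfolding c_def by (rule alpha_rep_commutator[OF G \<alpha> \<rho> g h])
  have "\<rho> g \<in> carrier_mat m m" "\<rho> h \<in> carrier_mat m m" using alpha_rep_carrier[OF \<rho>] g h by auto
  hence "det (\<rho> g) * det (\<rho> h) = c h ^ m * (det (\<rho> h) * det (\<rho> g))"
    using arg_cong[OF \<rho>gh, of det] by (simp add: det_mult)
  hence "c h ^ m = 1" using alpha_rep_det_nonzero[OF \<rho>] g h by (simp add: mult.commute)
  hence "c h = 1" using power_eq_1_coprime[OF _ c_order cop] by blast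
  thus ?thesis using \<rho>gh by simp
qed

section \<open>Common eigenvectors of commuting matrices of finite order\<close>

lemma cis_unity_root_pow_eq_1_iff:
  fixes N j :: nat
  assumes N: "N > 0"
  shows "cis (2 * pi / N) ^ j = 1 \<longleftrightarrow> N dvd j"
proof -
  have pow: "cis (2 * pi / N) ^ k = cis (2 * pi * real k / real N)" for k
    by (simp add: DeMoivre mult_ac)
  have root: "cis (2 * pi / N) ^ N = 1" unfolding pow using N by (simp add: complex_eq_iff)
  have "cis (2 * pi / N) ^ j = cis (2 * pi / N) ^ (j mod N) * (cis (2 * pi / N) ^ N) ^ (j div N)"
    by (metis mult.commute power_add power_mult mod_div_mult_eq)
  hence "cis (2 * pi / N) ^ j = 1 \<longleftrightarrow> cis (2 * pi * real (j mod N) / real N) = cis (2 * pi * real 0 / real N)"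
    using root pow by simp
  also have "\<dots> \<longleftrightarrow> j mod N = 0"
    using bij_betw_roots_unity[OF N] N unfolding bij_betw_def inj_on_def by (auto simp del: of_nat_0)
  finally show ?thesis by (simp add: dvd_eq_mod_eq_0)
qed

fun mat_sum :: "nat \<Rightarrow> (nat \<Rightarrow> 'a :: semiring_1 mat) \<Rightarrow> nat \<Rightarrow> 'a mat" where
  "mat_sum m f 0 = 0\<^sub>m m m"
| "mat_sum m f (Suc n) = mat_sum m f n + f n"

lemma mat_sum_carrier [simp]: "(\<And>j. f j \<in> carrier_mat m m) \<Longrightarrow> mat_sum m f n \<in> carrier_mat m m"
  by (induct n) auto

lemma index_mat_sum:
  assumes "\<And>j. f j \<in> carrier_mat m m" "i < m" "k < m"
  shows "mat_sum m f n $$ (i,k) = (\<Sum>j<n. f j $$ (i,k))"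
proof (induct n)
  case (Suc n)
  have "dim_row (f n) = m" "dim_col (f n) = m" using assms by auto
  thus ?case using Suc assms by simp
qed (use assms in simp)

lemma mult_mat_sum:
  assumes A: "A \<in> carrier_mat m m" and f: "\<And>j. f j \<in> carrier_mat m m"
  shows "A * mat_sum m f n = mat_sum m (\<lambda>j. A * f j) n"
  by (induct n) (use A f mult_add_distrib_mat[OF A mat_sum_carrier[OF f] f] in simp_all)

lemma mat_sum_mult:
  assumes A: "A \<in> carrier_mat m m" and f: "\<And>j. f j \<in> carrier_mat m m"
  shows "mat_sum m f n * A = mat_sum m (\<lambda>j. f j * A) n"
  by (induct n) (use A f add_mult_distrib_mat[OF mat_sum_carrier[OF f] f A] in simp_all)

text \<open>For \<open>M\<^sup>N = 1\<close> and \<open>z\<^sup>N = 1\<close>, \<open>eigen_proj m M z N\<close> is \<open>N\<close> times the projection onto the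
  \<open>z\<close>-eigenspace of \<open>M\<close>.\<close>

definition eigen_proj :: "nat \<Rightarrow> complex mat \<Rightarrow> complex \<Rightarrow> nat \<Rightarrow> complex mat" where
  "eigen_proj m M z N = mat_sum m (\<lambda>j. inverse z ^ j \<cdot>\<^sub>m M ^\<^sub>m j) N"

lemma eigen_proj_carrier [simp]: "M \<in> carrier_mat m m \<Longrightarrow> eigen_proj m M z N \<in> carrier_mat m m"
  unfolding eigen_proj_def by (rule mat_sum_carrier) simp

lemma index_eigen_proj:
  "M \<in> carrier_mat m m \<Longrightarrow> i < m \<Longrightarrow> k < m \<Longrightarrow>
    eigen_proj m M z N $$ (i,k) = (\<Sum>j<N. inverse z ^ j * (M ^\<^sub>m j) $$ (i,k))"
  unfolding eigen_proj_def by (subst index_mat_sum) auto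

lemma eigen_proj_commute:
  assumes A: "A \<in> carrier_mat m m" and M: "M \<in> carrier_mat m m" and AM: "A * M = M * A"
  shows "A * eigen_proj m M z N = eigen_proj m M z N * A"
proof -
  have "A * (inverse z ^ j \<cdot>\<^sub>m M ^\<^sub>m j) = (inverse z ^ j \<cdot>\<^sub>m M ^\<^sub>m j) * A" for j
    using mult_smult_distrib[OF A pow_carrier_mat[OF M]] mult_smult_assoc_mat[OF pow_carrier_mat[OF M] A]
      pow_mat_commute[OF A M AM] by simp
  thus ?thesis unfolding eigen_proj_def using A M by (simp add: mult_mat_sum mat_sum_mult)
qed

lemma mult_eigen_proj:
  assumes M: "M \<in> carrier_mat m m" and MN: "M ^\<^sub>m N = 1\<^sub>m m" and zN: "z ^ N = 1" and N: "N > 0"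
  shows "M * eigen_proj m M z N = z \<cdot>\<^sub>m eigen_proj m M z N"
proof (rule eq_matI)
  fix i k assume "i < dim_row (z \<cdot>\<^sub>m eigen_proj m M z N)" "k < dim_col (z \<cdot>\<^sub>m eigen_proj m M z N)"
  hence i: "i < m" and k: "k < m" using carrier_matD[OF eigen_proj_carrier[OF M, of z N]] by auto
  define S where "S j = (M ^\<^sub>m j) $$ (i,k)" for j
  obtain K where K: "N = Suc K" using N by (cases N) auto
  have z0: "z \<noteq> 0" using zN N by (cases "z = 0") (auto simp: zero_power)
  have zK: "inverse z ^ K = z" using zN z0 unfolding K by (simp add: power_inverse field_simps)
  have SN: "S N = S 0" unfolding S_def using MN M i k by simp
  have "M * (inverse z ^ j \<cdot>\<^sub>m M ^\<^sub>m j) = inverse z ^ j \<cdot>\<^sub>m M ^\<^sub>m Suc j" for j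
    using mult_smult_distrib[OF M pow_carrier_mat[OF M]] pow_mat_Suc_left[OF M] by (simp del: pow_mat.simps)
  hence "(M * eigen_proj m M z N) $$ (i,k) = mat_sum m (\<lambda>j. inverse z ^ j \<cdot>\<^sub>m M ^\<^sub>m Suc j) N $$ (i,k)"
    unfolding eigen_proj_def using M by (simp add: mult_mat_sum del: pow_mat.simps)
  also have "\<dots> = (\<Sum>j<N. inverse z ^ j * S (Suc j))"
    using M i k unfolding S_def by (subst index_mat_sum) (simp_all del: pow_mat.simps)
  also have "\<dots> = z * S 0 + (\<Sum>j<K. inverse z ^ j * S (Suc j))"
    using K SN zK by simp
  also have "\<dots> = z * (\<Sum>j<N. inverse z ^ j * S j)"
    unfolding K sum.lessThan_Suc_shift using z0
    by (simp add: distrib_left sum_distrib_left mult.assoc[symmetric])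
  also have "\<dots> = (z \<cdot>\<^sub>m eigen_proj m M z N) $$ (i,k)"
    using M i k carrier_matD[OF eigen_proj_carrier[OF M, of z N]] by (simp add: index_eigen_proj S_def)
  finally show "(M * eigen_proj m M z N) $$ (i,k) = (z \<cdot>\<^sub>m eigen_proj m M z N) $$ (i,k)" .
qed (use M carrier_matD[OF eigen_proj_carrier[OF M, of z N]] in auto)

lemma sum_eigen_proj:
  assumes M: "M \<in> carrier_mat m m" and N: "N > 0"
  defines "\<omega> \<equiv> cis (2 * pi / N)"
  shows "mat_sum m (\<lambda>l. eigen_proj m M (\<omega> ^ l) N) N = of_nat N \<cdot>\<^sub>m 1\<^sub>m m"
proof (rule eq_matI)
  fix i k assume "i < dim_row (of_nat N \<cdot>\<^sub>m 1\<^sub>m m :: complex mat)"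
    "k < dim_col (of_nat N \<cdot>\<^sub>m 1\<^sub>m m :: complex mat)"
  hence i: "i < m" and k: "k < m" by auto
  define S where "S j = (M ^\<^sub>m j) $$ (i,k)" for j
  have \<omega>: "\<omega> \<noteq> 0" unfolding \<omega>_def by (metis cis_neq_zero)
  have geom: "(\<Sum>l<N. inverse (\<omega> ^ j) ^ l) = (if j = 0 then of_nat N else 0)" if j: "j < N" for j
  proof (cases "j = 0")
    case False
    have "(inverse (\<omega> ^ j)) ^ N = 1"
      using cis_unity_root_pow_eq_1_iff[OF N, of "j * N"] unfolding \<omega>_def
      by (simp add: power_inverse power_mult[symmetric])
    moreover have "inverse (\<omega> ^ j) \<noteq> 1"
      using cis_unity_root_pow_eq_1_iff[OF N, of j] j False unfolding \<omega>_def
      by (metis dvd_imp_le inverse_1 inverse_inverse_eq not_le neq0_conv)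
    ultimately show ?thesis using False by (simp add: geometric_sum)
  qed simp
  have "mat_sum m (\<lambda>l. eigen_proj m M (\<omega> ^ l) N) N $$ (i,k) = (\<Sum>l<N. \<Sum>j<N. inverse (\<omega> ^ l) ^ j * S j)"
    using M i k by (subst index_mat_sum) (auto simp: index_eigen_proj S_def)
  also have "\<dots> = (\<Sum>j<N. (\<Sum>l<N. inverse (\<omega> ^ j) ^ l) * S j)"
    by (subst sum.swap) (simp add: sum_distrib_left sum_distrib_right power_inverse power_mult[symmetric] mult.commute)
  also have "\<dots> = (\<Sum>j<N. if j = 0 then of_nat N * S 0 else 0)"
    by (rule sum.cong) (auto simp: geom)
  also have "\<dots> = of_nat N * S 0" using N by (simp add: sum.delta)
  also have "\<dots> = (of_nat N \<cdot>\<^sub>m 1\<^sub>m m) $$ (i,k)" using i k M by (simp add: S_def)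
  finally show "mat_sum m (\<lambda>l. eigen_proj m M (\<omega> ^ l) N) N $$ (i,k) = (of_nat N \<cdot>\<^sub>m 1\<^sub>m m) $$ (i,k)" .
next
  have "mat_sum m (\<lambda>l. eigen_proj m M (\<omega> ^ l) N) N \<in> carrier_mat m m" using M by (intro mat_sum_carrier) simp
  thus "dim_row (mat_sum m (\<lambda>l. eigen_proj m M (\<omega> ^ l) N) N) = dim_row (of_nat N \<cdot>\<^sub>m 1\<^sub>m m :: complex mat)"
    "dim_col (mat_sum m (\<lambda>l. eigen_proj m M (\<omega> ^ l) N) N) = dim_col (of_nat N \<cdot>\<^sub>m 1\<^sub>m m :: complex mat)"
    by auto
qed

abbreviation cspan :: "nat \<Rightarrow> complex vec set \<Rightarrow> complex vec set" where
  "cspan m U \<equiv> module.span (class_ring :: complex ring) (module_vec TYPE(complex) m) U"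

abbreviation clin_indpt :: "nat \<Rightarrow> complex vec set \<Rightarrow> bool" where
  "clin_indpt m U \<equiv> \<not> module.lin_dep (class_ring :: complex ring) (module_vec TYPE(complex) m) U"

context
  fixes U :: "complex vec set" and m :: nat
  assumes U: "U \<subseteq> carrier_vec m"
begin

interpretation V: vec_space "TYPE(complex)" m .

lemma zero_in_cspan: "0\<^sub>v m \<in> cspan m U"
  using V.span_zero by simp

lemma add_in_cspan: "v \<in> cspan m U \<Longrightarrow> w \<in> cspan m U \<Longrightarrow> v + w \<in> cspan m U"
  using V.span_add1[OF U] by simp

lemma smult_in_cspan: "v \<in> cspan m U \<Longrightarrow> c \<cdot>\<^sub>v v \<in> cspan m U"
  using V.smult_in_span[OF U] by simp

lemma cspan_carrier: "v \<in> cspan m U \<Longrightarrow> v \<in> carrier_vec m"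
  using V.span_closed[OF U] by auto

lemma cspan_superset: "U \<subseteq> cspan m U"
  using V.in_own_span[OF U] by simp

lemma diff_in_cspan: "v \<in> cspan m U \<Longrightarrow> w \<in> cspan m U \<Longrightarrow> v - w \<in> cspan m U"
proof -
  assume v: "v \<in> cspan m U" and w: "w \<in> cspan m U"
  have "v - w = v + (-1) \<cdot>\<^sub>v w" using cspan_carrier[OF v] cspan_carrier[OF w] by (intro eq_vecI) auto
  thus ?thesis using add_in_cspan[OF v smult_in_cspan[OF w]] by simp
qed

lemma smult_in_cspan_imp_zero:
  assumes u: "u \<in> carrier_vec m" "u \<notin> cspan m U" and cu: "c \<cdot>\<^sub>v u \<in> cspan m U"
  shows "c = 0"
proof (rule ccontr)
  assume "c \<noteq> 0"
  hence "inverse c \<cdot>\<^sub>v (c \<cdot>\<^sub>v u) = u" using u by (intro eq_vecI) auto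
  thus False using smult_in_cspan[OF cu, of "inverse c"] u by simp
qed

lemma fixed_on_cspan:
  assumes A: "A \<in> carrier_mat m m" and fixed: "\<And>x. x \<in> U \<Longrightarrow> A *\<^sub>v x = x" and x: "x \<in> cspan m U"
  shows "A *\<^sub>v x = x"
proof -
  let ?H = "{x \<in> carrier_vec m. A *\<^sub>v x = x}"
  have "submodule class_ring ?H V.V"
  proof (rule submodule.intro)
    show "module class_ring V.V" by (rule vec_module)
    show "?H \<subseteq> carrier V.V" by auto
    have "A *\<^sub>v 0\<^sub>v m = 0\<^sub>v m" using A by (intro eq_vecI) auto
    thus "\<zero>\<^bsub>V.V\<^esub> \<in> ?H" by simp
    fix a b assume "a \<in> ?H" "b \<in> ?H"
    thus "a \<oplus>\<^bsub>V.V\<^esub> b \<in> ?H" using A by (simp add: mult_add_distrib_mat_vec[OF A])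
  next
    fix c a assume "a \<in> ?H"
    thus "c \<odot>\<^bsub>V.V\<^esub> a \<in> ?H" using mult_mat_vec[OF A, of a c] by simp
  qed
  hence "cspan m U \<subseteq> ?H" using V.span_is_subset[of U ?H] fixed U by auto
  thus ?thesis using x by auto
qed

lemma mat_sum_mult_vec_in_cspan:
  assumes f: "\<And>j. f j \<in> carrier_mat m m" and v: "v \<in> carrier_vec m"
    and fv: "\<And>j. j < k \<Longrightarrow> f j *\<^sub>v v \<in> cspan m U"
  shows "mat_sum m f k *\<^sub>v v \<in> cspan m U"
  using fv
proof (induct k)
  case 0
  have "0\<^sub>m m m *\<^sub>v v = 0\<^sub>v m" using v by (intro eq_vecI) (auto simp: scalar_prod_def)
  thus ?case using zero_in_cspan by simp
next
  case (Suc k)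
  have "mat_sum m f (Suc k) *\<^sub>v v = mat_sum m f k *\<^sub>v v + f k *\<^sub>v v"
    using add_mult_distrib_mat_vec[OF mat_sum_carrier[OF f] f v] by simp
  thus ?case using Suc add_in_cspan by simp
qed

lemma eigen_proj_mult_vec_in_cspan:
  assumes A: "A \<in> carrier_mat m m" and inv: "\<And>v. v \<in> cspan m U \<Longrightarrow> A *\<^sub>v v \<in> cspan m U"
    and v: "v \<in> cspan m U"
  shows "eigen_proj m A z N *\<^sub>v v \<in> cspan m U"
  unfolding eigen_proj_def
proof (rule mat_sum_mult_vec_in_cspan)
  have pow: "A ^\<^sub>m j *\<^sub>v v \<in> cspan m U" for j
  proof (induct j)
    case (Suc j)
    have "A ^\<^sub>m Suc j *\<^sub>v v = A *\<^sub>v (A ^\<^sub>m j *\<^sub>v v)"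
      using pow_mat_Suc_left[OF A] assoc_mult_mat_vec[OF A pow_carrier_mat[OF A] cspan_carrier[OF v]]
      by (simp del: pow_mat.simps)
    thus ?case using inv Suc by simp
  qed (use v cspan_carrier[OF v] A in simp)
  fix j
  show "(inverse z ^ j \<cdot>\<^sub>m A ^\<^sub>m j) *\<^sub>v v \<in> cspan m U"
    using smult_mat_mult_vec[OF pow_carrier_mat[OF A] cspan_carrier[OF v]] smult_in_cspan[OF pow] by simp
qed (use A cspan_carrier[OF v] in auto)

lemma commuting_mult_vec_eigen_mod_cspan:
  assumes P: "P \<in> carrier_mat m m" and B: "B \<in> carrier_mat m m" and BP: "B * P = P * B"
    and P_inv: "\<And>v. v \<in> cspan m U \<Longrightarrow> P *\<^sub>v v \<in> cspan m U"
    and u: "u \<in> carrier_vec m" and eigen: "B *\<^sub>v u - c \<cdot>\<^sub>v u \<in> cspan m U"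
  shows "B *\<^sub>v (P *\<^sub>v u) - c \<cdot>\<^sub>v (P *\<^sub>v u) \<in> cspan m U"
proof -
  have "B *\<^sub>v (P *\<^sub>v u) = P *\<^sub>v (B *\<^sub>v u)"
    using assoc_mult_mat_vec[OF B P u] assoc_mult_mat_vec[OF P B u] BP by simp
  moreover have "c \<cdot>\<^sub>v (P *\<^sub>v u) = P *\<^sub>v (c \<cdot>\<^sub>v u)" using mult_mat_vec[OF P u] by simp
  ultimately have "B *\<^sub>v (P *\<^sub>v u) - c \<cdot>\<^sub>v (P *\<^sub>v u) = P *\<^sub>v (B *\<^sub>v u - c \<cdot>\<^sub>v u)"
    using mult_minus_distrib_mat_vec[OF P, of "B *\<^sub>v u" "c \<cdot>\<^sub>v u"] B u by simp
  thus ?thesis using P_inv[OF eigen] by simp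
qed

lemma eigen_proj_eigenvector_mod_cspan:
  assumes A: "A \<in> carrier_mat m m" "A ^\<^sub>m N = 1\<^sub>m m" and N: "N > 0"
    and u: "u \<in> carrier_vec m" "u \<notin> cspan m U"
  obtains z where "eigen_proj m A z N *\<^sub>v u \<notin> cspan m U"
    "A *\<^sub>v (eigen_proj m A z N *\<^sub>v u) = z \<cdot>\<^sub>v (eigen_proj m A z N *\<^sub>v u)"
proof -
  define \<omega> where "\<omega> = cis (2 * pi / N)"
  have "\<exists>l. eigen_proj m A (\<omega> ^ l) N *\<^sub>v u \<notin> cspan m U"
  proof (rule ccontr)
    assume "\<nexists>l. eigen_proj m A (\<omega> ^ l) N *\<^sub>v u \<notin> cspan m U"
    hence "mat_sum m (\<lambda>l. eigen_proj m A (\<omega> ^ l) N) N *\<^sub>v u \<in> cspan m U"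
      using A u by (intro mat_sum_mult_vec_in_cspan) auto
    hence "(of_nat N \<cdot>\<^sub>m 1\<^sub>m m) *\<^sub>v u \<in> cspan m U" using sum_eigen_proj[OF A(1) N] \<omega>_def by simp
    hence "of_nat N \<cdot>\<^sub>v u \<in> cspan m U" using smult_mat_mult_vec[OF one_carrier_mat u(1)] u by simp
    from smult_in_cspan_imp_zero[OF u this] show False using N by simp
  qed
  then obtain l where notin: "eigen_proj m A (\<omega> ^ l) N *\<^sub>v u \<notin> cspan m U" by blast
  have "(\<omega> ^ l) ^ N = 1"
    unfolding \<omega>_def using cis_unity_root_pow_eq_1_iff[OF N, of "l * N"] by (simp add: power_mult)
  note eigen = mult_eigen_proj[OF A this N]
  have "A *\<^sub>v (eigen_proj m A (\<omega> ^ l) N *\<^sub>v u) = (A * eigen_proj m A (\<omega> ^ l) N) *\<^sub>v u"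
    using assoc_mult_mat_vec[OF A(1) eigen_proj_carrier[OF A(1)] u(1)] by simp
  also have "\<dots> = \<omega> ^ l \<cdot>\<^sub>v (eigen_proj m A (\<omega> ^ l) N *\<^sub>v u)"
    unfolding eigen using smult_mat_mult_vec[OF eigen_proj_carrier[OF A(1)] u(1)] .
  finally have "A *\<^sub>v (eigen_proj m A (\<omega> ^ l) N *\<^sub>v u) = \<omega> ^ l \<cdot>\<^sub>v (eigen_proj m A (\<omega> ^ l) N *\<^sub>v u)" .
  thus ?thesis using that notin by blast
qed

text \<open>Induction over \<open>F\<close>: apply to the current vector the eigenprojection of the next matrix
  for an eigenvalue that keeps it outside \<open>cspan m U\<close>; the projection commutes with the
  other matrices, so it preserves their eigen-relations modulo \<open>cspan m U\<close>.\<close>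

lemma common_eigenvector_mod_cspan:
  fixes M :: "'i \<Rightarrow> complex mat"
  assumes F: "finite F" and M: "\<And>x. x \<in> F \<Longrightarrow> M x \<in> carrier_mat m m"
    and comm: "\<And>x y. x \<in> F \<Longrightarrow> y \<in> F \<Longrightarrow> M x * M y = M y * M x"
    and order: "\<And>x. x \<in> F \<Longrightarrow> M x ^\<^sub>m N = 1\<^sub>m m" and N: "N > 0"
    and inv: "\<And>x v. x \<in> F \<Longrightarrow> v \<in> cspan m U \<Longrightarrow> M x *\<^sub>v v \<in> cspan m U"
    and u0: "u0 \<in> carrier_vec m" "u0 \<notin> cspan m U"
  obtains u \<mu> where "u \<in> carrier_vec m" "u \<notin> cspan m U"
    "\<And>x. x \<in> F \<Longrightarrow> M x *\<^sub>v u - \<mu> x \<cdot>\<^sub>v u \<in> cspan m U"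
proof -
  have "\<exists>u \<mu>. u \<in> carrier_vec m \<and> u \<notin> cspan m U \<and> (\<forall>x\<in>F'. M x *\<^sub>v u - \<mu> x \<cdot>\<^sub>v u \<in> cspan m U)"
    if "F' \<subseteq> F" for F'
    using finite_subset[OF that F] that
  proof (induct F' rule: finite_induct)
    case empty thus ?case using u0 by blast
  next
    case (insert a F')
    then obtain u \<mu> where u: "u \<in> carrier_vec m" "u \<notin> cspan m U"
      and u_eigen: "\<forall>x\<in>F'. M x *\<^sub>v u - \<mu> x \<cdot>\<^sub>v u \<in> cspan m U" by auto
    have a: "a \<in> F" using insert by auto
    obtain z where notin: "eigen_proj m (M a) z N *\<^sub>v u \<notin> cspan m U"
      and eigen_a: "M a *\<^sub>v (eigen_proj m (M a) z N *\<^sub>v u) = z \<cdot>\<^sub>v (eigen_proj m (M a) z N *\<^sub>v u)"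
      using eigen_proj_eigenvector_mod_cspan[OF M[OF a] order[OF a] N u] by blast
    define P where "P = eigen_proj m (M a) z N"
    have P: "P \<in> carrier_mat m m" unfolding P_def using M[OF a] by simp
    have eigen_F': "M x *\<^sub>v (P *\<^sub>v u) - \<mu> x \<cdot>\<^sub>v (P *\<^sub>v u) \<in> cspan m U" if x: "x \<in> F'" for x
    proof (rule commuting_mult_vec_eigen_mod_cspan[OF P])
      have xF: "x \<in> F" using x insert(4) by blast
      show "M x \<in> carrier_mat m m" using M[OF xF] .
      show "M x * P = P * M x" unfolding P_def by (rule eigen_proj_commute[OF M[OF xF] M[OF a] comm[OF xF a]])
      show "P *\<^sub>v v \<in> cspan m U" if "v \<in> cspan m U" for v
        unfolding P_def using eigen_proj_mult_vec_in_cspan[OF M[OF a] inv[OF a] that] .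
    qed (use u u_eigen x in auto)
    show ?case
    proof (intro exI[of _ "P *\<^sub>v u"] exI[of _ "\<mu>(a := z)"] conjI ballI)
      show "P *\<^sub>v u \<in> carrier_vec m" using P u by simp
      show "P *\<^sub>v u \<notin> cspan m U" using notin unfolding P_def .
      fix x assume x: "x \<in> insert a F'"
      show "M x *\<^sub>v (P *\<^sub>v u) - (\<mu>(a := z)) x \<cdot>\<^sub>v (P *\<^sub>v u) \<in> cspan m U"
      proof (cases "x = a")
        case True
        have "M a *\<^sub>v (P *\<^sub>v u) - z \<cdot>\<^sub>v (P *\<^sub>v u) = 0\<^sub>v m"
          unfolding P_def eigen_a using P[unfolded P_def] u by (intro eq_vecI) auto
        thus ?thesis using True zero_in_cspan by simp
      next
        case False
        thus ?thesis using x eigen_F' by simp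
      qed
    qed
  qed
  from this[OF order_refl] show ?thesis using that by blast
qed

end

lemma cspan_empty: "cspan m {} = {0\<^sub>v m}"
proof -
  interpret V: vec_space "TYPE(complex)" m .
  show ?thesis using V.span_empty by simp
qed

lemma clin_indpt_singleton:
  assumes u: "u \<in> carrier_vec m" and u0: "u \<noteq> 0\<^sub>v m"
  shows "clin_indpt m {u}"
proof -
  interpret V: vec_space "TYPE(complex)" m .
  have "clin_indpt m {}" unfolding V.lin_dep_def by auto
  moreover have "u \<notin> cspan m {}" using cspan_empty u0 by simp
  ultimately show ?thesis using V.lin_dep_iff_in_span[OF _ _ u] by simp
qed

lemma common_eigenvector:
  fixes M :: "'i \<Rightarrow> complex mat"
  assumes m: "m > 0" and F: "finite F" and M: "\<And>x. x \<in> F \<Longrightarrow> M x \<in> carrier_mat m m"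
    and comm: "\<And>x y. x \<in> F \<Longrightarrow> y \<in> F \<Longrightarrow> M x * M y = M y * M x"
    and order: "\<And>x. x \<in> F \<Longrightarrow> M x ^\<^sub>m N = 1\<^sub>m m" and N: "N > 0"
  shows "\<exists>u \<mu>. u \<in> carrier_vec m \<and> u \<noteq> 0\<^sub>v m \<and> (\<forall>x\<in>F. M x *\<^sub>v u = \<mu> x \<cdot>\<^sub>v u)"
proof -
  have "unit_vec m 0 \<noteq> (0\<^sub>v m :: complex vec)"
  proof
    assume "unit_vec m 0 = (0\<^sub>v m :: complex vec)"
    hence "unit_vec m 0 $ 0 = (0\<^sub>v m :: complex vec) $ 0" by simp
    thus False using m by simp
  qed
  hence e: "unit_vec m 0 \<notin> cspan m {}" using cspan_empty by simp
  have inv: "M x *\<^sub>v v \<in> cspan m {}" if x: "x \<in> F" and v: "v \<in> cspan m {}" for x v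
  proof -
    have "M x *\<^sub>v 0\<^sub>v m = 0\<^sub>v m" using M[OF x] by (intro eq_vecI) auto
    thus ?thesis using v cspan_empty by simp
  qed
  obtain u \<mu> where u: "u \<in> carrier_vec m" "u \<notin> cspan m {}"
    and eigen: "\<And>x. x \<in> F \<Longrightarrow> M x *\<^sub>v u - \<mu> x \<cdot>\<^sub>v u \<in> cspan m {}"
    by (rule common_eigenvector_mod_cspan[of "{}" m F M N "unit_vec m 0"]) (use F M comm order N inv e in auto)
  have "M x *\<^sub>v u = \<mu> x \<cdot>\<^sub>v u" if x: "x \<in> F" for x
  proof (rule eq_vecI)
    fix i assume "i < dim_vec (\<mu> x \<cdot>\<^sub>v u)"
    hence i: "i < m" using u by simp
    have "(M x *\<^sub>v u - \<mu> x \<cdot>\<^sub>v u) $ i = 0" using eigen[OF x] cspan_empty i by simp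
    thus "(M x *\<^sub>v u) $ i = (\<mu> x \<cdot>\<^sub>v u) $ i" using i u M[OF x] by simp
  qed (use u M[OF x] in simp)
  thus ?thesis using u cspan_empty by (intro exI[of _ u] exI[of _ \<mu>]) auto
qed

section \<open>Faithful linear representations and their stabiliser flags\<close>

lemma (in group) group_rank_attained:
  assumes "finite (carrier G)"
  obtains S where "S \<subseteq> carrier G" "finite S" "card S = group_rank G" "generate G S = carrier G"
proof -
  have "generate G (carrier G) = carrier G"
    using generate_incl[of "carrier G"] generate.incl[of _ "carrier G" G] by blast
  hence "\<exists>n S. S \<subseteq> carrier G \<and> finite S \<and> card S = n \<and> generate G S = carrier G" using assms by blast
  from LeastI_ex[OF this] show ?thesis using that unfolding group_rank_def by blast
qed

lemma group_rank_le_card: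
  "S \<subseteq> carrier G \<Longrightarrow> finite S \<Longrightarrow> generate G S = carrier G \<Longrightarrow> group_rank G \<le> card S"
  unfolding group_rank_def by (rule Least_le) auto

lemma finite_mult_closed_complex_cyclic:
  fixes A :: "complex set"
  assumes fin: "finite A" and ne: "A \<noteq> {}" and nz: "0 \<notin> A"
    and closed: "\<And>a b. a \<in> A \<Longrightarrow> b \<in> A \<Longrightarrow> a * b \<in> A"
  obtains a where "a \<in> A" "\<And>b. b \<in> A \<Longrightarrow> \<exists>j::nat. b = a ^ j"
proof -
  define N where "N = card A"
  have N: "N > 0" using fin ne by (simp add: N_def card_gt_0_iff)
  have root: "b ^ N = 1" if b: "b \<in> A" for b
  proof -
    have inj: "inj_on (\<lambda>x. b * x) A" using nz b unfolding inj_on_def by auto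
    have "(\<lambda>x. b * x) ` A = A"
      using closed b card_image[OF inj] by (intro card_subset_eq[OF fin]) auto
    hence "\<Prod>A = (\<Prod>x\<in>A. b * x)" using prod.reindex[OF inj, of id] by simp
    also have "\<dots> = b ^ N * \<Prod>A" by (simp add: prod.distrib N_def)
    finally show ?thesis using nz fin by simp
  qed
  have A: "A = {z. z ^ N = 1}"
    using root card_roots_unity_eq[OF N] N by (intro card_subset_eq finite_roots_unity) (auto simp: N_def)
  show ?thesis
  proof (rule that)
    show "cis (2 * pi / N) \<in> A" unfolding A using cis_unity_root_pow_eq_1_iff[OF N, of N] by simp
    fix b assume "b \<in> A"
    then obtain k where "b = cis (2 * pi * real k / real N)"
      using bij_betw_roots_unity[OF N] unfolding A bij_betw_def by auto
    hence "b = cis (2 * pi / N) ^ k" by (simp add: DeMoivre mult_ac)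
    thus "\<exists>j. b = cis (2 * pi / N) ^ j" ..
  qed
qed

lemma (in group) subgroup_nat_pow_closed: "subgroup H G \<Longrightarrow> g \<in> H \<Longrightarrow> g [^] (k::nat) \<in> H"
  by (induct k) (simp_all add: subgroup.one_closed subgroup.m_closed)

lemma (in group) generate_insert_kernel_generator:
  fixes \<mu> :: "'a \<Rightarrow> 'c :: field"
  assumes H: "subgroup H G" and S: "S \<subseteq> carrier G" and kernel: "generate G S = {g \<in> H. \<mu> g = 1}"
    and g0: "g0 \<in> H" and cyclic: "\<And>g. g \<in> H \<Longrightarrow> \<exists>j::nat. \<mu> g = \<mu> g0 ^ j"
    and mult: "\<And>g h. g \<in> H \<Longrightarrow> h \<in> H \<Longrightarrow> \<mu> (g \<otimes> h) = \<mu> g * \<mu> h" and one: "\<mu> \<one> = 1"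
  shows "generate G (insert g0 S) = H"
proof
  have "S \<subseteq> H" using generate.incl[of _ S G] kernel by blast
  thus "generate G (insert g0 S) \<subseteq> H" by (intro generate_subgroup_incl[OF _ H]) (use g0 in auto)
next
  interpret H: subgroup H G by fact
  have sub: "subgroup (generate G (insert g0 S)) G"
    using generate_is_subgroup S g0 H.subset by auto
  have pow: "\<mu> (g [^] (k::nat)) = \<mu> g ^ k" if g: "g \<in> H" for g k
  proof (induct k)
    case (Suc k)
    have "g [^] k \<in> H" using subgroup_nat_pow_closed[OF H g] .
    thus ?case using mult[OF _ g] Suc by simp
  qed (simp add: one)
  show "H \<subseteq> generate G (insert g0 S)"
  proof
    fix g assume g: "g \<in> H"
    obtain j where j: "\<mu> g = \<mu> g0 ^ j" using cyclic[OF g] by blast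
    define x where "x = g0 [^] j"
    have x: "x \<in> H" "\<mu> x = \<mu> g" unfolding x_def using subgroup_nat_pow_closed[OF H g0] pow[OF g0] j by auto
    have "\<mu> g * \<mu> (inv g) = 1" using mult[OF g H.m_inv_closed[OF g]] one g by simp
    hence "\<mu> g \<noteq> 0" by auto
    moreover have "\<mu> g = \<mu> (g \<otimes> inv x) * \<mu> g"
      using mult[OF H.m_closed[OF g H.m_inv_closed[OF x(1)]] x(1)] x g
      by (simp add: m_assoc)
    ultimately have "g \<otimes> inv x \<in> generate G S" using kernel g x by simp
    hence "g \<otimes> inv x \<in> generate G (insert g0 S)" using mono_generate[of S "insert g0 S"] by blast
    moreover have "x \<in> generate G (insert g0 S)"
      unfolding x_def using subgroup_nat_pow_closed[OF sub generate.incl[of g0 "insert g0 S"]] by simp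
    ultimately have "(g \<otimes> inv x) \<otimes> x \<in> generate G (insert g0 S)" using subgroup.m_closed[OF sub] by blast
    thus "g \<in> generate G (insert g0 S)" using g x by (simp add: m_assoc)
  qed
qed

locale faithful_abelian_rep = comm_group G for G :: "('a, 'b) monoid_scheme" (structure) +
  fixes m :: nat and \<psi> :: "'a \<Rightarrow> complex mat"
  assumes finite_carrier: "finite (carrier G)"
    and rep_carrier: "g \<in> carrier G \<Longrightarrow> \<psi> g \<in> carrier_mat m m"
    and rep_one: "\<psi> \<one> = 1\<^sub>m m"
    and rep_mult: "g \<in> carrier G \<Longrightarrow> h \<in> carrier G \<Longrightarrow> \<psi> (g \<otimes> h) = \<psi> g * \<psi> h"
    and faithful: "g \<in> carrier G \<Longrightarrow> \<psi> g = 1\<^sub>m m \<Longrightarrow> g = \<one>"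
begin

lemma rep_commute: "g \<in> carrier G \<Longrightarrow> h \<in> carrier G \<Longrightarrow> \<psi> g * \<psi> h = \<psi> h * \<psi> g"
  using rep_mult m_comm by metis

lemma rep_pow: "g \<in> carrier G \<Longrightarrow> \<psi> (g [^] (k::nat)) = \<psi> g ^\<^sub>m k"
  by (induct k) (simp_all add: rep_one rep_mult carrier_matD[OF rep_carrier])

lemma rep_pow_order:
  assumes g: "g \<in> carrier G" shows "\<psi> g ^\<^sub>m order G = 1\<^sub>m m"
proof -
  have "\<psi> g ^\<^sub>m order G = \<psi> (g [^] order G)" using rep_pow[OF g] by simp
  also have "\<dots> = 1\<^sub>m m" using pow_order_eq_1[OF g] rep_one by simp
  finally show ?thesis .
qed

lemma order_pos: "order G > 0"
  using finite_carrier one_closed unfolding Coset.order_def by (auto simp: card_gt_0_iff)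

definition Stab :: "complex vec set \<Rightarrow> 'a set" where
  "Stab U = {g \<in> carrier G. \<forall>x\<in>cspan m U. \<psi> g *\<^sub>v x = x}"

lemma Stab_carrier: "Stab U \<subseteq> carrier G"
  unfolding Stab_def by auto

lemma Stab_fixes: "g \<in> Stab U \<Longrightarrow> x \<in> cspan m U \<Longrightarrow> \<psi> g *\<^sub>v x = x"
  unfolding Stab_def by auto

lemma Stab_subgroup:
  assumes U: "U \<subseteq> carrier_vec m"
  shows "subgroup (Stab U) G"
proof (rule subgroupI)
  have "\<one> \<in> Stab U" unfolding Stab_def using rep_one cspan_carrier[OF U] by auto
  thus "Stab U \<noteq> {}" by auto
next
  fix g h assume g: "g \<in> Stab U" and h: "h \<in> Stab U"
  hence gh: "g \<in> carrier G" "h \<in> carrier G" using Stab_carrier by auto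
  show "g \<otimes> h \<in> Stab U" unfolding Stab_def
  proof (intro CollectI conjI ballI)
    fix x assume x: "x \<in> cspan m U"
    show "\<psi> (g \<otimes> h) *\<^sub>v x = x"
      using Stab_fixes[OF g x] Stab_fixes[OF h x] rep_mult[OF gh]
        assoc_mult_mat_vec[OF rep_carrier rep_carrier cspan_carrier[OF U x]] gh by simp
  qed (use gh in simp)
next
  fix g assume g: "g \<in> Stab U"
  hence gc: "g \<in> carrier G" using Stab_carrier by auto
  show "inv g \<in> Stab U" unfolding Stab_def
  proof (intro CollectI conjI ballI)
    fix x assume x: "x \<in> cspan m U"
    have "\<psi> (inv g) *\<^sub>v x = \<psi> (inv g) *\<^sub>v (\<psi> g *\<^sub>v x)" using Stab_fixes[OF g x] by simp
    also have "\<dots> = \<psi> (inv g \<otimes> g) *\<^sub>v x"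
      using rep_mult[of "inv g" g] gc assoc_mult_mat_vec[OF rep_carrier rep_carrier cspan_carrier[OF U x]]
      by simp
    finally show "\<psi> (inv g) *\<^sub>v x = x" using gc rep_one cspan_carrier[OF U x] by simp
  qed (use gc in simp)
qed (rule Stab_carrier)

lemma Stab_full_span:
  assumes U: "U \<subseteq> carrier_vec m" and full: "carrier_vec m \<subseteq> cspan m U"
  shows "Stab U = {\<one>}"
proof
  show "{\<one>} \<subseteq> Stab U" using subgroup.one_closed[OF Stab_subgroup[OF U]] by simp
  show "Stab U \<subseteq> {\<one>}"
  proof
    fix g assume g: "g \<in> Stab U"
    hence gc: "g \<in> carrier G" using Stab_carrier by auto
    have "\<psi> g = 1\<^sub>m m"
    proof (rule eq_matI)
      fix i j assume "i < dim_row (1\<^sub>m m :: complex mat)" "j < dim_col (1\<^sub>m m :: complex mat)"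
      hence i: "i < m" and j: "j < m" by auto
      have "\<psi> g $$ (i,j) = (\<psi> g *\<^sub>v unit_vec m j) $ i" using rep_carrier[OF gc] i j by simp
      also have "\<psi> g *\<^sub>v unit_vec m j = unit_vec m j" using Stab_fixes[OF g] full unit_vec_carrier by blast
      finally show "\<psi> g $$ (i,j) = 1\<^sub>m m $$ (i,j)" using i j by simp
    qed (use rep_carrier[OF gc] in auto)
    thus "g \<in> {\<one>}" using faithful[OF gc] by simp
  qed
qed

end

text \<open>Adjoining \<open>u\<close> to \<open>U\<close> cuts the stabiliser down to the kernel of the character \<open>\<mu>\<close>,
  whose image is cyclic: each new basis vector costs at most one generator.\<close>

locale stab_flag_step = faithful_abelian_rep +
  fixes U :: "complex vec set" and u :: "complex vec" and \<mu> :: "'a \<Rightarrow> complex"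
  assumes U: "U \<subseteq> carrier_vec m" and u: "u \<in> carrier_vec m" "u \<notin> cspan m U"
    and eigen: "g \<in> Stab U \<Longrightarrow> \<psi> g *\<^sub>v u - \<mu> g \<cdot>\<^sub>v u \<in> cspan m U"
begin

definition err :: "'a \<Rightarrow> complex vec" where
  "err g = \<psi> g *\<^sub>v u - \<mu> g \<cdot>\<^sub>v u"

lemma err_in_cspan: "g \<in> Stab U \<Longrightarrow> err g \<in> cspan m U"
  unfolding err_def by (rule eigen)

lemma rep_mult_u: "g \<in> Stab U \<Longrightarrow> \<psi> g *\<^sub>v u = err g + \<mu> g \<cdot>\<^sub>v u"
  unfolding err_def using rep_carrier Stab_carrier u by (intro eq_vecI) auto

lemma eigenvalue_one: "\<mu> \<one> = 1"
proof -
  have "\<one> \<in> Stab U" using subgroup.one_closed[OF Stab_subgroup[OF U]] .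
  moreover have "err \<one> = (1 - \<mu> \<one>) \<cdot>\<^sub>v u"
    unfolding err_def using rep_one u by (intro eq_vecI) (auto simp: algebra_simps)
  ultimately have "(1 - \<mu> \<one>) \<cdot>\<^sub>v u \<in> cspan m U" using err_in_cspan by metis
  from smult_in_cspan_imp_zero[OF U u this] show ?thesis by simp
qed

lemma eigenvalue_mult:
  assumes g: "g \<in> Stab U" and h: "h \<in> Stab U"
  shows "\<mu> (g \<otimes> h) = \<mu> g * \<mu> h"
proof -
  have gc: "g \<in> carrier G" and hc: "h \<in> carrier G" using g h Stab_carrier by auto
  note wg = err_in_cspan[OF g] and wh = err_in_cspan[OF h]
  have "\<psi> (g \<otimes> h) *\<^sub>v u = \<psi> g *\<^sub>v (err h + \<mu> h \<cdot>\<^sub>v u)"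
    using rep_mult[OF gc hc] assoc_mult_mat_vec[OF rep_carrier[OF gc] rep_carrier[OF hc] u(1)]
      rep_mult_u[OF h] by simp
  also have "\<dots> = err h + \<mu> h \<cdot>\<^sub>v (err g + \<mu> g \<cdot>\<^sub>v u)"
    using mult_add_distrib_mat_vec[OF rep_carrier[OF gc] cspan_carrier[OF U wh], of "\<mu> h \<cdot>\<^sub>v u"]
      mult_mat_vec[OF rep_carrier[OF gc] u(1)] u Stab_fixes[OF g wh] rep_mult_u[OF g] by simp
  finally have "(\<mu> (g \<otimes> h) - \<mu> g * \<mu> h) \<cdot>\<^sub>v u = (err h + \<mu> h \<cdot>\<^sub>v err g) - err (g \<otimes> h)"
    unfolding err_def[of "g \<otimes> h"] using u cspan_carrier[OF U wg] cspan_carrier[OF U wh]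
    by (intro eq_vecI) (auto simp: algebra_simps)
  also have "\<dots> \<in> cspan m U"
    using diff_in_cspan[OF U add_in_cspan[OF U wh smult_in_cspan[OF U wg]]
        err_in_cspan[OF subgroup.m_closed[OF Stab_subgroup[OF U] g h]]] .
  finally have "(\<mu> (g \<otimes> h) - \<mu> g * \<mu> h) \<cdot>\<^sub>v u \<in> cspan m U" .
  from smult_in_cspan_imp_zero[OF U u this] show ?thesis by simp
qed

lemma eigenvalue_nonzero:
  assumes g: "g \<in> Stab U" shows "\<mu> g \<noteq> 0"
proof -
  have "inv g \<in> Stab U" using subgroup.m_inv_closed[OF Stab_subgroup[OF U] g] .
  hence "\<mu> g * \<mu> (inv g) = \<mu> (g \<otimes> inv g)" using eigenvalue_mult[OF g] by simp
  also have "g \<otimes> inv g = \<one>" using g Stab_carrier r_inv by blast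
  finally show ?thesis using eigenvalue_one by auto
qed

text \<open>An element of the stabiliser with eigenvalue 1 acts unipotently on the span of \<open>U\<close> and \<open>u\<close>,
  so, having finite order, it fixes \<open>u\<close>.\<close>

lemma eigenvalue_one_fixes:
  assumes gS: "g \<in> Stab U" and \<mu>g: "\<mu> g = 1"
  shows "\<psi> g *\<^sub>v u = u"
proof -
  have gc: "g \<in> carrier G" using gS Stab_carrier by auto
  note w = cspan_carrier[OF U err_in_cspan[OF gS]]
  have pow: "\<psi> (g [^] k) *\<^sub>v u = u + of_nat k \<cdot>\<^sub>v err g" for k :: nat
  proof (induct k)
    case 0 thus ?case using rep_one u w by (intro eq_vecI) auto
  next
    case (Suc k)
    have gk: "g [^] k \<in> Stab U" using subgroup_nat_pow_closed[OF Stab_subgroup[OF U] gS] .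
    have \<psi>k: "\<psi> (g [^] k) \<in> carrier_mat m m" using rep_carrier gc by simp
    have "\<psi> (g [^] Suc k) *\<^sub>v u = \<psi> (g [^] k) *\<^sub>v (err g + u)"
      using rep_mult[of "g [^] k" g] gc assoc_mult_mat_vec[OF \<psi>k rep_carrier[OF gc] u(1)]
        rep_mult_u[OF gS] \<mu>g u by simp
    also have "\<dots> = err g + (u + of_nat k \<cdot>\<^sub>v err g)"
      using mult_add_distrib_mat_vec[OF \<psi>k w u(1)] Stab_fixes[OF gk err_in_cspan[OF gS]] Suc by simp
    also have "\<dots> = u + of_nat (Suc k) \<cdot>\<^sub>v err g" using u w by (intro eq_vecI) (auto simp: algebra_simps)
    finally show ?case .
  qed
  have u_eq: "u = u + of_nat (order G) \<cdot>\<^sub>v err g"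
    using pow[of "order G"] pow_order_eq_1[OF gc] rep_one u by simp
  have "err g = 0\<^sub>v m"
  proof (rule eq_vecI)
    fix i assume "i < dim_vec (0\<^sub>v m :: complex vec)"
    hence i: "i < m" by simp
    have "u $ i = (u + of_nat (order G) \<cdot>\<^sub>v err g) $ i" using u_eq by simp
    hence "of_nat (order G) * err g $ i = 0" using i u w by simp
    thus "err g $ i = 0\<^sub>v m $ i" using order_pos i by simp
  qed (use w in simp)
  thus ?thesis using rep_mult_u[OF gS] \<mu>g u by simp
qed

lemma Stab_insert: "Stab (insert u U) = {g \<in> Stab U. \<mu> g = 1}"
proof
  interpret V: vec_space "TYPE(complex)" m .
  have U': "insert u U \<subseteq> carrier_vec m" using U u by auto
  show "Stab (insert u U) \<subseteq> {g \<in> Stab U. \<mu> g = 1}"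
  proof
    fix g assume g: "g \<in> Stab (insert u U)"
    have "cspan m U \<subseteq> cspan m (insert u U)" using V.span_is_monotone[of U "insert u U"] by auto
    hence gS: "g \<in> Stab U" using g unfolding Stab_def by auto
    have "\<psi> g *\<^sub>v u = u" using Stab_fixes[OF g] cspan_superset[OF U'] by auto
    hence "err g = (1 - \<mu> g) \<cdot>\<^sub>v u" unfolding err_def using u by (intro eq_vecI) (auto simp: algebra_simps)
    hence "(1 - \<mu> g) \<cdot>\<^sub>v u \<in> cspan m U" using err_in_cspan[OF gS] by simp
    from smult_in_cspan_imp_zero[OF U u this] gS show "g \<in> {g \<in> Stab U. \<mu> g = 1}" by simp
  qed
  show "{g \<in> Stab U. \<mu> g = 1} \<subseteq> Stab (insert u U)"
  proof
    fix g assume "g \<in> {g \<in> Stab U. \<mu> g = 1}"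
    hence gS: "g \<in> Stab U" and \<mu>g: "\<mu> g = 1" by auto
    have gc: "g \<in> carrier G" using gS Stab_carrier by auto
    have "\<psi> g *\<^sub>v x = x" if x: "x \<in> cspan m (insert u U)" for x
      by (rule fixed_on_cspan[OF U' rep_carrier[OF gc] _ x])
        (use eigenvalue_one_fixes[OF gS \<mu>g] Stab_fixes[OF gS] cspan_superset[OF U] in auto)
    thus "g \<in> Stab (insert u U)" using gc unfolding Stab_def by auto
  qed
qed

lemma eigenvalues_cyclic:
  obtains g0 where "g0 \<in> Stab U" "\<And>g. g \<in> Stab U \<Longrightarrow> \<exists>j::nat. \<mu> g = \<mu> g0 ^ j"
proof -
  have sub: "subgroup (Stab U) G" by (rule Stab_subgroup[OF U])
  have "finite (\<mu> ` Stab U)" using finite_subset[OF Stab_carrier finite_carrier] by simp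
  moreover have "\<mu> ` Stab U \<noteq> {}" using subgroup.one_closed[OF sub] by auto
  moreover have "0 \<notin> \<mu> ` Stab U" using eigenvalue_nonzero by auto
  moreover have "x * y \<in> \<mu> ` Stab U" if x: "x \<in> \<mu> ` Stab U" and y: "y \<in> \<mu> ` Stab U" for x y
  proof -
    obtain g h where gh: "g \<in> Stab U" "h \<in> Stab U" "x = \<mu> g" "y = \<mu> h" using x y by auto
    hence "x * y = \<mu> (g \<otimes> h)" using eigenvalue_mult by simp
    thus ?thesis using subgroup.m_closed[OF sub gh(1,2)] by blast
  qed
  ultimately obtain a where "a \<in> \<mu> ` Stab U" "\<And>b. b \<in> \<mu> ` Stab U \<Longrightarrow> \<exists>j::nat. b = a ^ j"
    using finite_mult_closed_complex_cyclic by blast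
  thus ?thesis using that by blast
qed

lemma indpt_insert:
  assumes "clin_indpt m U"
  shows "clin_indpt m (insert u U)" "u \<notin> U" "card (insert u U) \<le> m"
proof -
  interpret V: vec_space "TYPE(complex)" m .
  show uU: "u \<notin> U" using u cspan_superset[OF U] by auto
  show indpt: "clin_indpt m (insert u U)" using V.lin_dep_iff_in_span[OF U assms u(1) uU] u by simp
  show "card (insert u U) \<le> m" using V.li_le_dim(2)[OF V.fin_dim _ indpt] U u V.dim_is_n by simp
qed

end

context faithful_abelian_rep
begin

lemma Stab_common_eigenvector_mod_cspan:
  assumes U: "U \<subseteq> carrier_vec m" and not_full: "\<not> carrier_vec m \<subseteq> cspan m U"
  obtains u \<mu> where "u \<in> carrier_vec m" "u \<notin> cspan m U"
    "\<And>g. g \<in> Stab U \<Longrightarrow> \<psi> g *\<^sub>v u - \<mu> g \<cdot>\<^sub>v u \<in> cspan m U"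
proof -
  obtain u0 where u0: "u0 \<in> carrier_vec m" "u0 \<notin> cspan m U" using not_full by auto
  have gc: "g \<in> carrier G" if "g \<in> Stab U" for g using that Stab_carrier by auto
  show ?thesis
  proof (rule common_eigenvector_mod_cspan[where F = "Stab U" and M = \<psi>, OF U _ _ _ _ order_pos _ u0])
    show "finite (Stab U)" using finite_subset[OF Stab_carrier finite_carrier] .
  qed (use that rep_carrier rep_commute rep_pow_order Stab_fixes gc in auto)
qed

lemma Stab_generated:
  assumes "U \<subseteq> carrier_vec m" "clin_indpt m U" "finite U"
  shows "\<exists>S. S \<subseteq> carrier G \<and> finite S \<and> card S \<le> m - card U \<and> generate G S = Stab U"
  using assms
proof (induct "m - card U" arbitrary: U rule: less_induct)
  case less
  show ?case
  proof (cases "carrier_vec m \<subseteq> cspan m U")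
    case True
    thus ?thesis using Stab_full_span[OF less(2) True] generate_empty by (intro exI[of _ "{}"]) auto
  next
    case False
    obtain u \<mu> where u: "u \<in> carrier_vec m" "u \<notin> cspan m U"
      and eigen: "\<And>g. g \<in> Stab U \<Longrightarrow> \<psi> g *\<^sub>v u - \<mu> g \<cdot>\<^sub>v u \<in> cspan m U"
      using Stab_common_eigenvector_mod_cspan[OF less(2) False] by blast
    interpret stab_flag_step G m \<psi> U u \<mu>
      by unfold_locales (use less(2) u eigen in auto)
    note indpt = indpt_insert[OF less(3)]
    have card: "card (insert u U) = Suc (card U)" using less(4) indpt(2) by simp
    have "m - card (insert u U) < m - card U" using card indpt(3) by simp
    moreover have "insert u U \<subseteq> carrier_vec m" "finite (insert u U)" using less(2,4) u by auto
    ultimately obtain S where S: "S \<subseteq> carrier G" "finite S" "card S \<le> m - card (insert u U)"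
      "generate G S = Stab (insert u U)"
      using less(1)[of "insert u U"] indpt(1) by blast
    obtain g0 where g0: "g0 \<in> Stab U" "\<And>g. g \<in> Stab U \<Longrightarrow> \<exists>j::nat. \<mu> g = \<mu> g0 ^ j"
      using eigenvalues_cyclic by blast
    have "generate G (insert g0 S) = Stab U"
      using generate_insert_kernel_generator[OF Stab_subgroup[OF less(2)] S(1) _ g0 eigenvalue_mult eigenvalue_one]
        S(4) Stab_insert by simp
    moreover have "card (insert g0 S) \<le> m - card U"
    proof -
      have "card (insert g0 S) \<le> Suc (card S)" using S(2) by (simp add: card_insert_if)
      thus ?thesis using S(3) card indpt(3) by arith
    qed
    moreover have "insert g0 S \<subseteq> carrier G" using S(1) g0(1) Stab_carrier by auto
    ultimately show ?thesis using S(2) by (intro exI[of _ "insert g0 S"]) auto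
  qed
qed

theorem group_rank_le_of_fixed_vector:
  assumes u: "u \<in> carrier_vec m" "u \<noteq> 0\<^sub>v m" and fixed: "\<And>g. g \<in> carrier G \<Longrightarrow> \<psi> g *\<^sub>v u = u"
  shows "group_rank G \<le> m - 1"
proof -
  have U: "{u} \<subseteq> carrier_vec m" using u by simp
  have "carrier G \<subseteq> Stab {u}"
  proof
    fix g assume g: "g \<in> carrier G"
    have "\<forall>x\<in>cspan m {u}. \<psi> g *\<^sub>v x = x" using fixed_on_cspan[OF U rep_carrier[OF g]] fixed[OF g] by blast
    thus "g \<in> Stab {u}" using g unfolding Stab_def by auto
  qed
  hence Stab: "Stab {u} = carrier G" using Stab_carrier by blast
  obtain S where "S \<subseteq> carrier G" "finite S" "card S \<le> m - 1" "generate G S = carrier G"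
    using Stab_generated[OF U clin_indpt_singleton[OF u]] Stab by auto
  thus ?thesis using group_rank_le_card[of S G] by simp
qed

end

section \<open>From projective to linear representations\<close>

lemma alpha_rep_pow:
  assumes G: "group G" and \<alpha>: "cocycle2 G \<alpha>" and \<rho>: "alpha_rep G \<alpha> m \<rho>" and h: "h \<in> carrier G"
  shows "\<exists>s. s \<noteq> 0 \<and> \<rho> h ^\<^sub>m k = s \<cdot>\<^sub>m \<rho> (h [^]\<^bsub>G\<^esub> k)"
proof (induct k)
  case 0 thus ?case using alpha_rep_one[OF \<rho>] alpha_rep_carrier[OF \<rho> h] by (intro exI[of _ 1]) auto
next
  case (Suc k)
  then obtain s where s: "s \<noteq> 0" "\<rho> h ^\<^sub>m k = s \<cdot>\<^sub>m \<rho> (h [^]\<^bsub>G\<^esub> k)" by auto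
  have hk: "h [^]\<^bsub>G\<^esub> k \<in> carrier G" using monoid.nat_pow_closed[OF group.is_monoid[OF G] h] .
  have "\<rho> h ^\<^sub>m Suc k = s \<cdot>\<^sub>m (\<rho> (h [^]\<^bsub>G\<^esub> k) * \<rho> h)"
    using s mult_smult_assoc_mat[OF alpha_rep_carrier[OF \<rho> hk] alpha_rep_carrier[OF \<rho> h]] by simp
  also have "\<dots> = (s * \<alpha> (h [^]\<^bsub>G\<^esub> k) h) \<cdot>\<^sub>m \<rho> (h [^]\<^bsub>G\<^esub> Suc k)"
    using alpha_rep_mult[OF \<rho> hk h] by (simp add: smult_smult_mat)
  finally show ?case using s cocycle2_nonzero[OF \<alpha> hk h] by (intro exI[of _ "s * \<alpha> (h [^]\<^bsub>G\<^esub> k) h"]) auto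
qed

lemma alpha_rep_pow_order:
  assumes G: "group G" and \<alpha>: "cocycle2 G \<alpha>" and \<rho>: "alpha_rep G \<alpha> m \<rho>"
    and fin: "finite (carrier G)" and h: "h \<in> carrier G"
  shows "\<exists>t. t \<noteq> 0 \<and> \<rho> h ^\<^sub>m order G = t ^ order G \<cdot>\<^sub>m 1\<^sub>m m"
proof -
  interpret G: group G by fact
  define N where "N = order G"
  have N: "N > 0" using fin G.one_closed unfolding N_def Coset.order_def by (auto simp: card_gt_0_iff)
  obtain s where s: "s \<noteq> 0" "\<rho> h ^\<^sub>m N = s \<cdot>\<^sub>m \<rho> (h [^]\<^bsub>G\<^esub> N)" using alpha_rep_pow[OF G \<alpha> \<rho> h] by blast
  have "card {t::complex. t ^ N = s} = N" using card_nth_roots[OF s(1) N] .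
  hence "{t::complex. t ^ N = s} \<noteq> {}" using N by (metis card.empty less_irrefl)
  then obtain t where t: "t ^ N = s" by blast
  have "t \<noteq> 0" using t s(1) N by (cases "t = 0") (auto simp: zero_power)
  moreover have "\<rho> h ^\<^sub>m N = t ^ N \<cdot>\<^sub>m 1\<^sub>m m"
    using s(2) t alpha_rep_one[OF \<rho>] G.pow_order_eq_1[OF h] N_def by simp
  ultimately show ?thesis unfolding N_def by blast
qed

text \<open>Divided by an \<open>order G\<close>-th root of the scalar \<open>\<rho> h ^ order G\<close>, the \<open>\<rho> h\<close> become
  commuting matrices of finite order.\<close>

lemma alpha_rep_common_eigenvector:
  assumes G: "group G" and fin: "finite (carrier G)" and \<alpha>: "cocycle2 G \<alpha>"
    and \<rho>: "alpha_rep G \<alpha> m \<rho>" and m: "m > 0"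
    and commute: "\<And>g h. g \<in> carrier G \<Longrightarrow> h \<in> carrier G \<Longrightarrow> \<rho> g * \<rho> h = \<rho> h * \<rho> g"
  shows "\<exists>u \<mu>. u \<in> carrier_vec m \<and> u \<noteq> 0\<^sub>v m \<and> (\<forall>g\<in>carrier G. \<rho> g *\<^sub>v u = \<mu> g \<cdot>\<^sub>v u)"
proof -
  define N where "N = order G"
  have N: "N > 0" using fin group.is_monoid[OF G] unfolding N_def Coset.order_def
    by (auto simp: card_gt_0_iff monoid.one_closed)
  note car = alpha_rep_carrier[OF \<rho>]
  obtain t where t: "\<And>h. h \<in> carrier G \<Longrightarrow> t h \<noteq> 0 \<and> \<rho> h ^\<^sub>m N = t h ^ N \<cdot>\<^sub>m 1\<^sub>m m"
    using alpha_rep_pow_order[OF G \<alpha> \<rho> fin] unfolding N_def by metis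
  define M where "M h = inverse (t h) \<cdot>\<^sub>m \<rho> h" for h
  have M: "M h \<in> carrier_mat m m" if "h \<in> carrier G" for h unfolding M_def using car[OF that] by simp
  have M_order: "M h ^\<^sub>m N = 1\<^sub>m m" if h: "h \<in> carrier G" for h
  proof -
    have "M h ^\<^sub>m N = inverse (t h) ^ N \<cdot>\<^sub>m (\<rho> h ^\<^sub>m N)"
      unfolding M_def using smult_pow_mat[OF car[OF h]] .
    also have "\<dots> = (inverse (t h) ^ N * t h ^ N) \<cdot>\<^sub>m 1\<^sub>m m" using t[OF h] by (simp add: smult_smult_mat)
    also have "inverse (t h) ^ N * t h ^ N = 1" using t[OF h] by (simp add: power_inverse)
    finally show ?thesis by simp
  qed
  have M_commute: "M x * M y = M y * M x" if x: "x \<in> carrier G" and y: "y \<in> carrier G" for x y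
  proof -
    have "M x * M y = (inverse (t x) * inverse (t y)) \<cdot>\<^sub>m (\<rho> x * \<rho> y)" unfolding M_def
      using mult_smult_assoc_mat[OF car[OF x] smult_carrier_mat[OF car[OF y]]] mult_smult_distrib[OF car[OF x] car[OF y]]
      by (simp add: smult_smult_mat)
    also have "\<dots> = (inverse (t y) * inverse (t x)) \<cdot>\<^sub>m (\<rho> y * \<rho> x)" using commute[OF x y] by (simp add: mult.commute)
    also have "\<dots> = M y * M x" unfolding M_def
      using mult_smult_assoc_mat[OF car[OF y] smult_carrier_mat[OF car[OF x]]] mult_smult_distrib[OF car[OF y] car[OF x]]
      by (simp add: smult_smult_mat)
    finally show ?thesis .
  qed
  have "\<exists>u \<kappa>. u \<in> carrier_vec m \<and> u \<noteq> 0\<^sub>v m \<and> (\<forall>h\<in>carrier G. M h *\<^sub>v u = \<kappa> h \<cdot>\<^sub>v u)"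
    by (rule common_eigenvector[OF m fin M M_commute M_order N])
  then obtain u \<kappa> where u: "u \<in> carrier_vec m" "u \<noteq> 0\<^sub>v m"
    and eigen: "\<forall>h\<in>carrier G. M h *\<^sub>v u = \<kappa> h \<cdot>\<^sub>v u"
    by blast
  have "\<rho> h *\<^sub>v u = (t h * \<kappa> h) \<cdot>\<^sub>v u" if h: "h \<in> carrier G" for h
  proof -
    have "\<rho> h = t h \<cdot>\<^sub>m M h" unfolding M_def using t[OF h] by (simp add: smult_smult_mat)
    thus ?thesis using smult_mat_mult_vec[OF M[OF h] u(1)] eigen h by (simp add: smult_smult_assoc)
  qed
  thus ?thesis using u by (intro exI[of _ u] exI[of _ "\<lambda>h. t h * \<kappa> h"]) auto
qed

context
  fixes G :: "('a, 'b) monoid_scheme" and \<alpha> \<rho> m u and \<mu> :: "'a \<Rightarrow> complex"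
  assumes \<alpha>: "cocycle2 G \<alpha>" and \<rho>: "alpha_rep G \<alpha> m \<rho>"
    and u: "u \<in> carrier_vec m" "u \<noteq> 0\<^sub>v m" and eigen: "\<forall>g\<in>carrier G. \<rho> g *\<^sub>v u = \<mu> g \<cdot>\<^sub>v u"
begin

lemma alpha_rep_eigenvalue_mult:
  assumes g: "g \<in> carrier G" and h: "h \<in> carrier G" and gh: "g \<otimes>\<^bsub>G\<^esub> h \<in> carrier G"
  shows "\<mu> g * \<mu> h = \<alpha> g h * \<mu> (g \<otimes>\<^bsub>G\<^esub> h)"
proof (rule smult_vec_cancel[OF u])
  note car = alpha_rep_carrier[OF \<rho>]
  have "(\<mu> g * \<mu> h) \<cdot>\<^sub>v u = \<rho> g *\<^sub>v (\<rho> h *\<^sub>v u)"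
    using eigen g h mult_mat_vec[OF car[OF g] u(1)] by (simp add: smult_smult_assoc mult.commute)
  also have "\<dots> = (\<rho> g * \<rho> h) *\<^sub>v u" using assoc_mult_mat_vec[OF car[OF g] car[OF h] u(1)] by simp
  also have "\<dots> = (\<alpha> g h * \<mu> (g \<otimes>\<^bsub>G\<^esub> h)) \<cdot>\<^sub>v u"
    using alpha_rep_mult[OF \<rho> g h] smult_mat_mult_vec[OF car[OF gh] u(1)] eigen gh
    by (simp add: smult_smult_assoc)
  finally show "(\<mu> g * \<mu> h) \<cdot>\<^sub>v u = (\<alpha> g h * \<mu> (g \<otimes>\<^bsub>G\<^esub> h)) \<cdot>\<^sub>v u" .
qed

lemma alpha_rep_eigenvalue_one: "group G \<Longrightarrow> \<mu> \<one>\<^bsub>G\<^esub> = 1"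
  using eigen alpha_rep_one[OF \<rho>] u monoid.one_closed[OF group.is_monoid]
  by (intro smult_vec_cancel[OF u]) force

lemma alpha_rep_eigenvalue_nonzero:
  assumes G: "group G" and g: "g \<in> carrier G"
  shows "\<mu> g \<noteq> 0"
proof -
  interpret G: group G by fact
  have "\<mu> g * \<mu> (inv\<^bsub>G\<^esub> g) = \<alpha> g (inv\<^bsub>G\<^esub> g)"
    using alpha_rep_eigenvalue_mult[of g "inv\<^bsub>G\<^esub> g"] g alpha_rep_eigenvalue_one[OF G] by simp
  thus ?thesis using cocycle2_nonzero[OF \<alpha> g G.inv_closed[OF g]] by auto
qed

lemma alpha_rep_normalize:
  assumes G: "comm_group G" and fin: "finite (carrier G)"
    and faithful: "\<And>g. g \<in> carrier G \<Longrightarrow> \<exists>c. \<rho> g = c \<cdot>\<^sub>m 1\<^sub>m m \<Longrightarrow> g = \<one>\<^bsub>G\<^esub>"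
  defines "\<psi> \<equiv> \<lambda>g. inverse (\<mu> g) \<cdot>\<^sub>m \<rho> g"
  shows "faithful_abelian_rep G m \<psi>" and "\<And>g. g \<in> carrier G \<Longrightarrow> \<psi> g *\<^sub>v u = u"
proof -
  interpret G: comm_group G by fact
  note car = alpha_rep_carrier[OF \<rho>]
  note \<mu>_nonzero = alpha_rep_eigenvalue_nonzero[OF G.is_group]
  show "faithful_abelian_rep G m \<psi>"
  proof (intro faithful_abelian_rep.intro faithful_abelian_rep_axioms.intro)
    show "comm_group G" "finite (carrier G)" by fact+
    show "\<psi> g \<in> carrier_mat m m" if "g \<in> carrier G" for g unfolding \<psi>_def using car[OF that] by simp
    show "\<psi> \<one>\<^bsub>G\<^esub> = 1\<^sub>m m"
      unfolding \<psi>_def using alpha_rep_eigenvalue_one[OF G.is_group] alpha_rep_one[OF \<rho>] by simp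
    show "\<psi> (g \<otimes>\<^bsub>G\<^esub> h) = \<psi> g * \<psi> h" if g: "g \<in> carrier G" and h: "h \<in> carrier G" for g h
    proof -
      have "\<psi> g * \<psi> h = (inverse (\<mu> g) * inverse (\<mu> h)) \<cdot>\<^sub>m (\<rho> g * \<rho> h)" unfolding \<psi>_def
        using mult_smult_assoc_mat[OF car[OF g] smult_carrier_mat[OF car[OF h]]] mult_smult_distrib[OF car[OF g] car[OF h]]
        by (simp add: smult_smult_mat)
      also have "\<dots> = (inverse (\<mu> g) * inverse (\<mu> h) * \<alpha> g h) \<cdot>\<^sub>m \<rho> (g \<otimes>\<^bsub>G\<^esub> h)"
        using alpha_rep_mult[OF \<rho> g h] by (simp add: smult_smult_mat)
      also have "inverse (\<mu> g) * inverse (\<mu> h) * \<alpha> g h = inverse (\<mu> (g \<otimes>\<^bsub>G\<^esub> h))"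
        using alpha_rep_eigenvalue_mult[OF g h] \<mu>_nonzero[OF g] \<mu>_nonzero[OF h] cocycle2_nonzero[OF \<alpha> g h] g h
        by (simp add: field_simps)
      finally show ?thesis unfolding \<psi>_def by simp
    qed
    show "g = \<one>\<^bsub>G\<^esub>" if g: "g \<in> carrier G" and "\<psi> g = 1\<^sub>m m" for g
    proof (rule faithful[OF g])
      have "\<rho> g = \<mu> g \<cdot>\<^sub>m \<psi> g" unfolding \<psi>_def using \<mu>_nonzero[OF g] by (simp add: smult_smult_mat)
      thus "\<exists>c. \<rho> g = c \<cdot>\<^sub>m 1\<^sub>m m" using \<open>\<psi> g = 1\<^sub>m m\<close> by auto
    qed
  qed
  show "\<psi> g *\<^sub>v u = u" if g: "g \<in> carrier G" for g
    unfolding \<psi>_def using smult_mat_mult_vec[OF car[OF g] u(1)] eigen g \<mu>_nonzero[OF g]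
    by (simp add: smult_smult_assoc)
qed

end

lemma faithful_proj_rep_degree_pos:
  assumes \<rho>: "faithful_proj_rep G m \<rho>" and nontrivial: "carrier G \<noteq> {\<one>\<^bsub>G\<^esub>}" and G: "group G"
  shows "m > 0"
proof (rule ccontr)
  assume "\<not> m > 0"
  hence m: "m = 0" by simp
  obtain \<alpha> where "alpha_rep G \<alpha> m \<rho>" using \<rho> unfolding faithful_proj_rep_def proj_rep_def by blast
  have "g = \<one>\<^bsub>G\<^esub>" if g: "g \<in> carrier G" for g
  proof -
    have "\<rho> g \<in> carrier_mat 0 0" using alpha_rep_carrier[OF \<open>alpha_rep G \<alpha> m \<rho>\<close> g] m by simp
    hence "\<rho> g = 1 \<cdot>\<^sub>m 1\<^sub>m m" using m by (intro eq_matI) auto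
    thus ?thesis using \<rho> g unfolding faithful_proj_rep_def by blast
  qed
  thus False using nontrivial monoid.one_closed[OF group.is_monoid[OF G]] by blast
qed

theorem group_rank_lt_degree:
  assumes G: "comm_group G" and fin: "finite (carrier G)" and nontrivial: "carrier G \<noteq> {\<one>\<^bsub>G\<^esub>}"
    and \<rho>: "faithful_proj_rep G m \<rho>" and cop: "coprime m (order G)"
  shows "group_rank G < m"
proof -
  have grp: "group G" using G by (simp add: comm_group_def)
  have m: "m > 0" by (rule faithful_proj_rep_degree_pos[OF \<rho> nontrivial grp])
  obtain \<alpha> where \<alpha>: "cocycle2 G \<alpha>" and rep: "alpha_rep G \<alpha> m \<rho>"
    and faithful: "\<And>g. g \<in> carrier G \<Longrightarrow> \<exists>c. \<rho> g = c \<cdot>\<^sub>m 1\<^sub>m m \<Longrightarrow> g = \<one>\<^bsub>G\<^esub>"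
    using \<rho> unfolding faithful_proj_rep_def proj_rep_def by blast
  have "\<exists>u \<mu>. u \<in> carrier_vec m \<and> u \<noteq> 0\<^sub>v m \<and> (\<forall>g\<in>carrier G. \<rho> g *\<^sub>v u = \<mu> g \<cdot>\<^sub>v u)"
    by (rule alpha_rep_common_eigenvector[OF grp fin \<alpha> rep m alpha_rep_commute[OF G \<alpha> rep cop]])
  then obtain u \<mu> where u: "u \<in> carrier_vec m" "u \<noteq> 0\<^sub>v m"
    and eigen: "\<forall>g\<in>carrier G. \<rho> g *\<^sub>v u = \<mu> g \<cdot>\<^sub>v u"
    by blast
  note \<psi> = alpha_rep_normalize[OF \<alpha> rep u eigen G fin faithful]
  have "group_rank G \<le> m - 1"
    by (rule faithful_abelian_rep.group_rank_le_of_fixed_vector[OF \<psi>(1) u \<psi>(2)])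
  thus ?thesis using m by simp
qed

section \<open>Characters separating the points of a finite abelian group\<close>

definition is_char :: "('a, 'b) monoid_scheme \<Rightarrow> 'a set \<Rightarrow> ('a \<Rightarrow> complex) \<Rightarrow> bool" where
  "is_char G H \<chi> \<longleftrightarrow> (\<forall>x\<in>H. \<chi> x \<noteq> 0) \<and> (\<forall>x\<in>H. \<forall>y\<in>H. \<chi> (x \<otimes>\<^bsub>G\<^esub> y) = \<chi> x * \<chi> y)"

definition adjoin :: "('a, 'b) monoid_scheme \<Rightarrow> 'a set \<Rightarrow> 'a \<Rightarrow> 'a set" where
  "adjoin G H s = {h \<otimes>\<^bsub>G\<^esub> s [^]\<^bsub>G\<^esub> (j::nat) | h j. h \<in> H}"

context comm_group
begin

lemma char_one: "subgroup H G \<Longrightarrow> is_char G H \<chi> \<Longrightarrow> \<chi> \<one> = 1"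
  using subgroup.one_closed[of H G] unfolding is_char_def by (metis l_one mult_cancel_right1 one_closed)

lemma char_pow:
  assumes H: "subgroup H G" and \<chi>: "is_char G H \<chi>" and h: "h \<in> H"
  shows "\<chi> (h [^] (k::nat)) = \<chi> h ^ k"
proof (induct k)
  case (Suc k)
  thus ?case using \<chi> h subgroup_nat_pow_closed[OF H h] unfolding is_char_def by simp
qed (use char_one[OF H \<chi>] in simp)

lemma pow_in_subgroup_iff_dvd:
  assumes H: "subgroup H G" and s: "s \<in> carrier G" and d: "d > 0" "s [^] d \<in> H"
    and min: "\<And>j::nat. 0 < j \<Longrightarrow> j < d \<Longrightarrow> s [^] j \<notin> H"
  shows "s [^] (j::nat) \<in> H \<longleftrightarrow> d dvd j"
proof -
  have sdq: "(s [^] d) [^] (j div d) \<in> H" using subgroup_nat_pow_closed[OF H d(2)] .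
  have j: "s [^] j = (s [^] d) [^] (j div d) \<otimes> s [^] (j mod d)"
    using s by (simp add: nat_pow_pow nat_pow_mult mult.commute[of d])
  have "s [^] j \<in> H \<longleftrightarrow> s [^] (j mod d) \<in> H"
  proof
    assume "s [^] j \<in> H"
    moreover have "s [^] (j mod d) = inv ((s [^] d) [^] (j div d)) \<otimes> s [^] j"
      using j s by (simp add: m_assoc[symmetric])
    ultimately show "s [^] (j mod d) \<in> H"
      using subgroup.m_closed[OF H subgroup.m_inv_closed[OF H sdq]] by simp
  qed (use j sdq subgroup.m_closed[OF H] in simp)
  also have "\<dots> \<longleftrightarrow> j mod d = 0" using min[of "j mod d"] d subgroup.one_closed[OF H] by fastforce
  finally show ?thesis by (simp add: dvd_eq_mod_eq_0)
qed

lemma least_pow_in_subgroup: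
  assumes fin: "finite (carrier G)" and H: "subgroup H G" and s: "s \<in> carrier G"
  obtains d :: nat where "d > 0" "\<And>j::nat. s [^] j \<in> H \<longleftrightarrow> d dvd j"
proof -
  define P where "P d \<longleftrightarrow> 0 < d \<and> s [^] d \<in> H" for d :: nat
  have "order G > 0" using fin one_closed unfolding Coset.order_def by (auto simp: card_gt_0_iff)
  hence "P (order G)" unfolding P_def using pow_order_eq_1[OF s] subgroup.one_closed[OF H] by simp
  hence "P (LEAST d. P d)" by (rule LeastI)
  moreover have "\<And>j. 0 < j \<Longrightarrow> j < (LEAST d. P d) \<Longrightarrow> s [^] j \<notin> H"
    using not_less_Least[of _ P] unfolding P_def by blast
  ultimately show ?thesis using that pow_in_subgroup_iff_dvd[OF H s] unfolding P_def by blast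
qed

lemma mult_adjoin_elems:
  "h1 \<in> carrier G \<Longrightarrow> h2 \<in> carrier G \<Longrightarrow> s \<in> carrier G \<Longrightarrow>
    (h1 \<otimes> s [^] (j1::nat)) \<otimes> (h2 \<otimes> s [^] (j2::nat)) = (h1 \<otimes> h2) \<otimes> s [^] (j1 + j2)"
  by (simp add: nat_pow_mult[symmetric] m_ac)

lemma adjoin_subgroup:
  assumes fin: "finite (carrier G)" and H: "subgroup H G" and s: "s \<in> carrier G"
  shows "subgroup (adjoin G H s) G" "H \<subseteq> adjoin G H s" "s \<in> adjoin G H s"
proof -
  have Hc: "H \<subseteq> carrier G" using subgroup.subset[OF H] .
  show sub: "H \<subseteq> adjoin G H s"
  proof
    fix h assume "h \<in> H"
    moreover hence "h = h \<otimes> s [^] (0::nat)" using Hc by auto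
    ultimately show "h \<in> adjoin G H s" unfolding adjoin_def by blast
  qed
  have "s = \<one> \<otimes> s [^] (1::nat)" using s by simp
  thus "s \<in> adjoin G H s" unfolding adjoin_def using subgroup.one_closed[OF H] by blast
  show "subgroup (adjoin G H s) G"
  proof (rule subgroupI)
    show "adjoin G H s \<subseteq> carrier G" unfolding adjoin_def using Hc s by auto
    show "adjoin G H s \<noteq> {}" using sub subgroup.one_closed[OF H] by auto
  next
    fix x assume "x \<in> adjoin G H s"
    then obtain h j where h: "h \<in> H" and x: "x = h \<otimes> s [^] (j::nat)" unfolding adjoin_def by auto
    have hc: "h \<in> carrier G" using h Hc by auto
    have "order G > 0" using fin one_closed unfolding Coset.order_def by (auto simp: card_gt_0_iff)
    hence "j + (order G - 1) * j = order G * j" by (cases "order G") auto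
    hence "s [^] j \<otimes> s [^] ((order G - 1) * j) = (s [^] order G) [^] j"
      using s by (simp add: nat_pow_mult nat_pow_pow)
    also have "\<dots> = \<one>" using pow_order_eq_1[OF s] by simp
    finally have "inv (s [^] j) = s [^] ((order G - 1) * j)" using s by (simp add: inv_char m_comm)
    hence "inv x = inv h \<otimes> s [^] ((order G - 1) * j)" using x hc s by (simp add: inv_mult)
    thus "inv x \<in> adjoin G H s" unfolding adjoin_def using subgroup.m_inv_closed[OF H h] by blast
  next
    fix x y assume "x \<in> adjoin G H s" "y \<in> adjoin G H s"
    then obtain h1 j1 h2 j2 where h: "h1 \<in> H" "h2 \<in> H" and xy: "x = h1 \<otimes> s [^] (j1::nat)" "y = h2 \<otimes> s [^] (j2::nat)"
      unfolding adjoin_def by auto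
    have "x \<otimes> y = (h1 \<otimes> h2) \<otimes> s [^] (j1 + j2)"
      using xy h Hc s mult_adjoin_elems[of h1 h2 s j1 j2] by blast
    thus "x \<otimes> y \<in> adjoin G H s" unfolding adjoin_def using subgroup.m_closed[OF H h] by blast
  qed
qed

lemma char_adjoin_well_defined:
  assumes H: "subgroup H G" and \<chi>: "is_char G H \<chi>" and s: "s \<in> carrier G"
    and d: "\<And>j::nat. s [^] j \<in> H \<longleftrightarrow> d dvd j" and c: "c ^ d = \<chi> (s [^] d)"
    and h: "h1 \<in> H" "h2 \<in> H" and le: "j1 \<le> j2" and eq: "h1 \<otimes> s [^] (j1::nat) = h2 \<otimes> s [^] (j2::nat)"
  shows "\<chi> h1 * c ^ j1 = \<chi> h2 * c ^ j2"
proof -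
  define e where "e = j2 - j1"
  have hc: "h1 \<in> carrier G" "h2 \<in> carrier G" using h subgroup.subset[OF H] by auto
  have "h1 \<otimes> s [^] j1 = (h2 \<otimes> s [^] e) \<otimes> s [^] j1"
    using eq le s hc by (simp add: e_def m_assoc nat_pow_mult)
  hence h1: "h1 = h2 \<otimes> s [^] e" using s hc by simp
  hence "s [^] e = inv h2 \<otimes> h1" using s hc by (simp add: m_assoc[symmetric])
  hence se: "s [^] e \<in> H" using subgroup.m_closed[OF H subgroup.m_inv_closed[OF H h(2)] h(1)] by simp
  then obtain q where q: "e = d * q" using d by blast
  have "s [^] e = (s [^] d) [^] q" using s q by (simp add: nat_pow_pow)
  hence "\<chi> (s [^] e) = c ^ e" using char_pow[OF H \<chi>, of "s [^] d" q] d[of d] c q by (simp add: power_mult)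
  hence "\<chi> h1 = \<chi> h2 * c ^ e" using h1 \<chi> h(2) se unfolding is_char_def by simp
  thus ?thesis using le by (simp add: e_def mult.assoc power_add[symmetric])
qed

text \<open>Since \<open>s [^] e \<in> H\<close> forces \<open>d dvd e\<close>, sending \<open>s\<close> to a \<open>d\<close>-th root of \<open>\<chi> (s [^] d)\<close> gives a
  well-defined extension.\<close>

lemma char_adjoin:
  assumes H: "subgroup H G" and \<chi>: "is_char G H \<chi>" and s: "s \<in> carrier G"
    and d: "d > 0" "\<And>j::nat. s [^] j \<in> H \<longleftrightarrow> d dvd j" and c: "c ^ d = \<chi> (s [^] d)"
  obtains \<chi>' where "is_char G (adjoin G H s) \<chi>'" "\<And>h j. h \<in> H \<Longrightarrow> \<chi>' (h \<otimes> s [^] (j::nat)) = \<chi> h * c ^ j"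
proof -
  have Hc: "H \<subseteq> carrier G" using subgroup.subset[OF H] .
  have \<chi>_mult: "\<And>x y. x \<in> H \<Longrightarrow> y \<in> H \<Longrightarrow> \<chi> (x \<otimes> y) = \<chi> x * \<chi> y"
    using \<chi> unfolding is_char_def by blast
  have sd: "s [^] d \<in> H" using d(2)[of d] by simp
  have well_def: "\<chi> h1 * c ^ j1 = \<chi> h2 * c ^ j2"
    if "h1 \<in> H" "h2 \<in> H" "h1 \<otimes> s [^] (j1::nat) = h2 \<otimes> s [^] (j2::nat)" for h1 h2 j1 j2
    using char_adjoin_well_defined[OF H \<chi> s d(2) c, of h1 h2 j1 j2]
      char_adjoin_well_defined[OF H \<chi> s d(2) c, of h2 h1 j2 j1] that by (cases "j1 \<le> j2") auto
  define \<chi>' where "\<chi>' x = (THE v. \<exists>h\<in>H. \<exists>j::nat. x = h \<otimes> s [^] j \<and> v = \<chi> h * c ^ j)" for x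
  have val: "\<chi>' (h \<otimes> s [^] j) = \<chi> h * c ^ j" if h: "h \<in> H" for h and j :: nat
    unfolding \<chi>'_def
  proof (rule the_equality)
    show "\<exists>h'\<in>H. \<exists>j'. h \<otimes> s [^] j = h' \<otimes> s [^] j' \<and> \<chi> h * c ^ j = \<chi> h' * c ^ j'" using h by blast
    fix v assume "\<exists>h'\<in>H. \<exists>j'::nat. h \<otimes> s [^] j = h' \<otimes> s [^] j' \<and> v = \<chi> h' * c ^ j'"
    then obtain h' j' where "h' \<in> H" "h \<otimes> s [^] j = h' \<otimes> s [^] (j'::nat)" "v = \<chi> h' * c ^ j'" by blast
    thus "v = \<chi> h * c ^ j" using well_def[OF h] by metis
  qed
  have "c \<noteq> 0"
  proof
    assume "c = 0"
    hence "\<chi> (s [^] d) = 0" using c d(1) by (simp add: zero_power)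
    thus False using sd \<chi> unfolding is_char_def by blast
  qed
  hence "is_char G (adjoin G H s) \<chi>'"
    unfolding is_char_def
  proof (intro conjI ballI)
    fix x assume "x \<in> adjoin G H s"
    then obtain h j where h: "h \<in> H" and x: "x = h \<otimes> s [^] (j::nat)" unfolding adjoin_def by blast
    show "\<chi>' x \<noteq> 0" using val[OF h] x \<chi> h \<open>c \<noteq> 0\<close> unfolding is_char_def by simp
  next
    fix x y assume "x \<in> adjoin G H s" "y \<in> adjoin G H s"
    then obtain h1 j1 h2 j2 where h: "h1 \<in> H" "h2 \<in> H"
      and xy: "x = h1 \<otimes> s [^] (j1::nat)" "y = h2 \<otimes> s [^] (j2::nat)" unfolding adjoin_def by blast
    have "x \<otimes> y = (h1 \<otimes> h2) \<otimes> s [^] (j1 + j2)" using xy h Hc s mult_adjoin_elems[of h1 h2 s j1 j2] by blast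
    thus "\<chi>' (x \<otimes> y) = \<chi>' x * \<chi>' y"
      using val subgroup.m_closed[OF H h] \<chi>_mult[OF h] xy h by (simp add: power_add)
  qed
  thus ?thesis using that val by blast
qed

lemma char_extend:
  assumes fin: "finite (carrier G)"
  shows "subgroup H G \<Longrightarrow> is_char G H \<chi> \<Longrightarrow> \<exists>\<chi>'. is_char G (carrier G) \<chi>' \<and> (\<forall>h\<in>H. \<chi>' h = \<chi> h)"
proof (induct "card (carrier G - H)" arbitrary: H \<chi> rule: less_induct)
  case less
  note H = less.prems(1) and \<chi> = less.prems(2)
  show ?case
  proof (cases "H = carrier G")
    case True thus ?thesis using \<chi> by auto
  next
    case False
    then obtain s where s: "s \<in> carrier G" "s \<notin> H" using subgroup.subset[OF H] by auto
    obtain d where d: "d > 0" "\<And>j::nat. s [^] j \<in> H \<longleftrightarrow> d dvd j"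
      using least_pow_in_subgroup[OF fin H s(1)] by blast
    have "\<chi> (s [^] d) \<noteq> 0" using \<chi> d(2)[of d] unfolding is_char_def by auto
    hence "card {c. c ^ d = \<chi> (s [^] d)} = d" using card_nth_roots d(1) by blast
    then obtain c where c: "c ^ d = \<chi> (s [^] d)" using d(1) by (metis (mono_tags) card.empty empty_Collect_eq less_irrefl)
    obtain \<chi>' where \<chi>': "is_char G (adjoin G H s) \<chi>'"
      and val: "\<And>h j. h \<in> H \<Longrightarrow> \<chi>' (h \<otimes> s [^] (j::nat)) = \<chi> h * c ^ j"
      using char_adjoin[OF H \<chi> s(1) d c] by blast
    note adj = adjoin_subgroup[OF fin H s(1)]
    have "carrier G - adjoin G H s \<subset> carrier G - H" using adj s by auto
    hence "card (carrier G - adjoin G H s) < card (carrier G - H)" using fin by (intro psubset_card_mono) auto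
    then obtain \<chi>'' where \<chi>'': "is_char G (carrier G) \<chi>''" and ext: "\<forall>h\<in>adjoin G H s. \<chi>'' h = \<chi>' h"
      using less.hyps adj(1) \<chi>' by blast
    have "\<chi>'' h = \<chi> h" if h: "h \<in> H" for h
    proof -
      have "h \<in> carrier G" using h subgroup.subset[OF H] by auto
      thus ?thesis using ext adj(2) h val[OF h, of 0] by auto
    qed
    thus ?thesis using \<chi>'' by blast
  qed
qed

theorem separating_chars:
  assumes fin: "finite (carrier G)"
  shows "finite S \<Longrightarrow> S \<subseteq> carrier G \<Longrightarrow> \<exists>cs. length cs = card S \<and> (\<forall>\<chi>\<in>set cs. is_char G (carrier G) \<chi>)
     \<and> (\<forall>x\<in>generate G S. (\<forall>\<chi>\<in>set cs. \<chi> x = 1) \<longrightarrow> x = \<one>)"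
proof (induct S rule: finite_induct)
  case empty thus ?case using generate_empty by (intro exI[of _ "[]"]) auto
next
  case (insert s S)
  have S: "S \<subseteq> carrier G" and s: "s \<in> carrier G" using insert by auto
  obtain cs where cs: "length cs = card S" "\<forall>\<chi>\<in>set cs. is_char G (carrier G) \<chi>"
    "\<forall>x\<in>generate G S. (\<forall>\<chi>\<in>set cs. \<chi> x = 1) \<longrightarrow> x = \<one>" using insert(3)[OF S] by blast
  define H where "H = generate G S"
  have H: "subgroup H G" unfolding H_def using generate_is_subgroup[OF S] .
  obtain d where d: "d > 0" "\<And>j::nat. s [^] j \<in> H \<longleftrightarrow> d dvd j"
    using least_pow_in_subgroup[OF fin H s] by blast
  define \<omega> where "\<omega> = cis (2 * pi / d)"
  have "\<omega> ^ d = 1" using cis_unity_root_pow_eq_1_iff[OF d(1), of d] unfolding \<omega>_def by simp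
  moreover have triv: "is_char G H (\<lambda>_. 1)" unfolding is_char_def by simp
  ultimately obtain \<chi>' where \<chi>': "is_char G (adjoin G H s) \<chi>'"
    and val: "\<And>h j. h \<in> H \<Longrightarrow> \<chi>' (h \<otimes> s [^] (j::nat)) = \<omega> ^ j"
    using char_adjoin[OF H triv s d, of \<omega>] by auto
  note adj = adjoin_subgroup[OF fin H s]
  obtain \<chi>'' where \<chi>'': "is_char G (carrier G) \<chi>''" and ext: "\<forall>h\<in>adjoin G H s. \<chi>'' h = \<chi>' h"
    using char_extend[OF fin adj(1) \<chi>'] by blast
  show ?case
  proof (intro exI[of _ "\<chi>'' # cs"] conjI ballI impI)
    show "length (\<chi>'' # cs) = card (insert s S)" using cs(1) insert(1,2) by simp
    show "\<chi> \<in> set (\<chi>'' # cs) \<Longrightarrow> is_char G (carrier G) \<chi>" for \<chi> using cs(2) \<chi>'' by auto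
    fix x assume x: "x \<in> generate G (insert s S)" and trivial: "\<forall>\<chi>\<in>set (\<chi>'' # cs). \<chi> x = 1"
    have "insert s S \<subseteq> adjoin G H s" using adj(2,3) generate.incl[of _ S G] unfolding H_def by blast
    hence "x \<in> adjoin G H s" using generate_subgroup_incl[OF _ adj(1)] x by blast
    then obtain h j where h: "h \<in> H" and xhj: "x = h \<otimes> s [^] (j::nat)" unfolding adjoin_def by blast
    have "\<omega> ^ j = 1" using trivial ext val[OF h] \<open>x \<in> adjoin G H s\<close> xhj by auto
    hence "s [^] j \<in> H" using d(2) cis_unity_root_pow_eq_1_iff[OF d(1)] unfolding \<omega>_def by blast
    hence "x \<in> H" using xhj subgroup.m_closed[OF H h] by simp
    thus "x = \<one>" using cs(3) trivial unfolding H_def by simp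
  qed
qed

end

section \<open>Diagonal representations\<close>

lemma mat_diag_cong: "(\<And>i. i < n \<Longrightarrow> f i = g i) \<Longrightarrow> mat_diag n f = mat_diag n g"
  unfolding mat_diag_def by (rule eq_matI) auto

lemma mat_diag_eq_smult_one:
  fixes f :: "nat \<Rightarrow> 'a :: semiring_1"
  assumes eq: "mat_diag n f = c \<cdot>\<^sub>m 1\<^sub>m n" and i: "i < n"
  shows "f i = c"
proof -
  have "mat_diag n f $$ (i,i) = (c \<cdot>\<^sub>m 1\<^sub>m n) $$ (i,i)" using eq by simp
  thus ?thesis using i unfolding mat_diag_def by simp
qed

lemma invertible_mat_diag:
  fixes f :: "nat \<Rightarrow> 'a :: field"
  assumes "\<And>i. i < n \<Longrightarrow> f i \<noteq> 0"
  shows "invertible_mat (mat_diag n f)"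
proof -
  have "mat_diag n f * mat_diag n (\<lambda>i. inverse (f i)) = mat_diag n (\<lambda>_. 1)"
    "mat_diag n (\<lambda>i. inverse (f i)) * mat_diag n f = mat_diag n (\<lambda>_. 1)"
    unfolding mat_diag_diag using assms by (auto simp del: mat_diag_one intro!: mat_diag_cong)
  thus ?thesis unfolding invertible_mat_def inverts_mat_def mat_diag_one
    by (intro conjI exI[of _ "mat_diag n (\<lambda>i. inverse (f i))"]) (auto simp: mat_diag_def)
qed

text \<open>The entry \<open>1\<close> in front of the characters makes the diagonal representation faithful
  even projectively: a scalar matrix must then be the identity.\<close>

theorem faithful_proj_rep_of_generators:
  assumes G: "comm_group G" and fin: "finite (carrier G)"
    and S: "S \<subseteq> carrier G" "finite S" and gen: "generate G S = carrier G"
  shows "\<exists>\<rho>. faithful_proj_rep G (card S + 1) \<rho>"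
proof -
  interpret G: comm_group G by fact
  obtain cs where cs: "length cs = card S" "\<forall>\<chi>\<in>set cs. is_char G (carrier G) \<chi>"
    "\<forall>x\<in>generate G S. (\<forall>\<chi>\<in>set cs. \<chi> x = 1) \<longrightarrow> x = \<one>\<^bsub>G\<^esub>"
    using G.separating_chars[OF fin S(2,1)] by blast
  define n where "n = card S + 1"
  define f where "f g i = (if i = 0 then 1 else (cs ! (i - 1)) g)" for g i
  define \<rho> where "\<rho> g = mat_diag n (f g)" for g
  have \<chi>: "is_char G (carrier G) (cs ! (i - 1))" if "i < n" "i \<noteq> 0" for i
    using cs(1,2) that unfolding n_def by auto
  have f_nonzero: "f g i \<noteq> 0" if "g \<in> carrier G" "i < n" for g i
    using \<chi>[of i] that unfolding f_def is_char_def by auto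
  have f_mult: "f (g \<otimes>\<^bsub>G\<^esub> h) i = f g i * f h i" if "g \<in> carrier G" "h \<in> carrier G" "i < n" for g h i
    using \<chi>[of i] that unfolding f_def is_char_def by auto
  have f_one: "f \<one>\<^bsub>G\<^esub> i = 1" if "i < n" for i
    using G.char_one[OF G.subgroup_self \<chi>[OF that]] unfolding f_def by simp
  have "\<rho> \<one>\<^bsub>G\<^esub> = 1\<^sub>m n" unfolding \<rho>_def using f_one mat_diag_cong[of n "f \<one>\<^bsub>G\<^esub>" "\<lambda>_. 1"] by simp
  moreover have "\<rho> g * \<rho> h = 1 \<cdot>\<^sub>m \<rho> (g \<otimes>\<^bsub>G\<^esub> h)" if "g \<in> carrier G" "h \<in> carrier G" for g h
    unfolding \<rho>_def using f_mult[OF that] by (auto intro: mat_diag_cong)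
  moreover have "invertible_mat (\<rho> g)" if "g \<in> carrier G" for g
    unfolding \<rho>_def using invertible_mat_diag f_nonzero[OF that] by blast
  ultimately have rep: "alpha_rep G (\<lambda>_ _. 1) n \<rho>" unfolding alpha_rep_def \<rho>_def by auto
  have "g = \<one>\<^bsub>G\<^esub>" if g: "g \<in> carrier G" and c: "\<rho> g = c \<cdot>\<^sub>m 1\<^sub>m n" for g c
  proof -
    have fc: "f g i = c" if "i < n" for i using mat_diag_eq_smult_one[OF c[unfolded \<rho>_def] that] .
    hence "c = 1" using fc[of 0] unfolding f_def n_def by simp
    hence "(cs ! k) g = 1" if "k < length cs" for k using fc[of "Suc k"] that cs(1) unfolding f_def n_def by simp
    hence "\<forall>\<chi>\<in>set cs. \<chi> g = 1" by (auto simp: in_set_conv_nth)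
    thus ?thesis using cs(3) g gen by auto
  qed
  hence "faithful_proj_rep G n \<rho>"
    unfolding faithful_proj_rep_def proj_rep_def cocycle2_def using rep by (auto intro!: exI[of _ "\<lambda>_ _. 1"])
  thus ?thesis unfolding n_def by blast
qed

theorem lemma4p8:
  fixes G :: "('a, 'b) monoid_scheme" and p n :: nat
  assumes "comm_group G" and "finite (carrier G)"
    and "prime p" and "\<exists>k. order G = p ^ k"
    and "carrier G \<noteq> {\<one>\<^bsub>G\<^esub>}"
    and "group_rank G = n" and "n \<le> p - 1"
  shows "tau G = n + 1"
proof -
  note G = assms(1) and fin = assms(2) and p = assms(3) and nontrivial = assms(5)
  interpret G: comm_group G by fact
  obtain k where order: "order G = p ^ k" using assms(4) by blast
  obtain S where S: "S \<subseteq> carrier G" "finite S" "card S = n" "generate G S = carrier G"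
    using G.group_rank_attained[OF fin] assms(6) by metis
  have lower: "n + 1 \<le> m" if \<rho>: "faithful_proj_rep G m \<rho>" for m \<rho>
  proof (rule ccontr)
    assume "\<not> n + 1 \<le> m"
    hence "m < p" using assms(7) prime_gt_1_nat[OF p] by linarith
    moreover have "m > 0" using faithful_proj_rep_degree_pos[OF \<rho> nontrivial G.is_group] .
    ultimately have "coprime m (order G)"
      unfolding order using prime_imp_coprime[OF p] by (simp add: coprime_commute nat_dvd_not_less)
    hence "group_rank G < m" using group_rank_lt_degree[OF G fin nontrivial \<rho>] by blast
    thus False using \<open>\<not> n + 1 \<le> m\<close> assms(6) by simp
  qed
  obtain \<rho> where "faithful_proj_rep G (n + 1) \<rho>"
    using faithful_proj_rep_of_generators[OF G fin S(1,2,4)] S(3) by blast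
  thus ?thesis unfolding tau_def by (intro Least_equality) (use lower in blast)+
qed

end
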